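(* Let $T>0$, $N\ge1$, $B^1,\dots,B^N$ independent standard real Brownian motions with augmented natural filtration $\mathscr{F}^{(N)}$; let $\xi^i$, $f^i$, $h$ (increasing, bi-Lipschitz with constants $0<m\le M$, $\mathbb{E}[h(\xi)]\ge0$), $\theta^i=\xi^i+\psi^{(N)}_T$ be as described in the context, and let $(\{Y^i,Z^i\}_{1\le i\le N},K^{(N)})$ be the unique square integrable flat solution of \[ Y_t^i=\theta^i+\int_t^T f_u^i\,du-\int_t^T\sum_{j=1}^N Z_u^{i,j}\,dB_u^j+K_T^{(N)}-K_t^{(N)},\quad 1\le i\le N,\qquad \frac1N\sum_{i=1}^N h(Y_t^i)\ge0 . \] Fix $0\le t\le T$. Then for every $1\le i\le N$, \[ Y^i_s=\mathbb{E}\Big[Y^i_t+\int_s^t f^i_u\,du\,\Big|\,\mathscr{F}^{(N)}_s\Big]+R_s,\qquad 0\le s\le t, \] where $\{R_s\}_{0\le s\le t}$ is the Snell envelope (on $[0,t]$, with respect to $\mathscr{F}^{(N)}$) of the process \[ \phi^{(N)}_s=\inf\Big\{x\ge0:\frac1N\sum_{i=1}^N h\Big(x+\mathbb{E}\Big[Y^i_t+\int_s^t f^i_u\,du\,\Big|\,\mathscr{F}^{(N)}_s\Big]\Big)\ge0\Big\},\qquad 0\le s\le t. \]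
   Context: $\xi=G(\{B_t\}_{t\le T})$ is square integrable, $f_t=F(t,\{B_{s\wedge t}\}_{s\le T})$ is progressively measurable with $\mathbb{E}\int_0^T|f_t|^2dt<\infty$ ($B$ a standard Brownian motion, $G,F$ measurable), and $\xi^i=G(\{B^i_t\})$, $f^i_t=F(t,\{B^i_{s\wedge t}\})$. $h:\mathbb{R}\to\mathbb{R}$ is increasing with $m|x-y|\le|h(x)-h(y)|\le M|x-y|$. $\psi^{(N)}_T=\inf\{x\ge0:\frac1N\sum_i h(x+\xi^i)\ge0\}$. A square integrable flat solution means $Y^i\in\mathscr{S}^2$ (adapted continuous, $\mathbb{E}\sup|Y|^2<\infty$), $Z^i$ predictable $\mathbb{R}^N$-valued with $\mathbb{E}\int_0^T|Z^i|^2<\infty$, $K^{(N)}$ continuous adapted non-decreasing with $K^{(N)}_0=0$ and $\mathbb{E}\sup|K^{(N)}|^2<\infty$, the equations and constraint hold for all $t$, and $\int_0^T\frac1N\sum_i h(Y^i_t)\,dK^{(N)}_t=0$. (Existence and uniqueness of this solution hold under these assumptions.) *)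

theory Defs
  imports "HOL-Probability.Probability"
begin

(* Indices of the particles: i, j range over {..<N} (i.e. 0..N-1 instead of 1..N). *)

definition nat_gen :: "'a measure \<Rightarrow> nat \<Rightarrow> (nat \<Rightarrow> real \<Rightarrow> 'a \<Rightarrow> real) \<Rightarrow> real \<Rightarrow> 'a set set" where
  "nat_gen M N B s =
     {(\<lambda>\<omega>. B j u \<omega>) -` A \<inter> space M | j u A. j < N \<and> 0 \<le> u \<and> u \<le> s \<and> A \<in> sets borel}"

definition aug_filt :: "'a measure \<Rightarrow> nat \<Rightarrow> (nat \<Rightarrow> real \<Rightarrow> 'a \<Rightarrow> real) \<Rightarrow> real \<Rightarrow> 'a measure" where
  "aug_filt M N B s = sigma (space M) (nat_gen M N B s \<union> null_sets M)"

definition indep_std_BMs :: "'a measure \<Rightarrow> nat \<Rightarrow> real \<Rightarrow> (nat \<Rightarrow> real \<Rightarrow> 'a \<Rightarrow> real) \<Rightarrow> bool" where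
  "indep_std_BMs M N T B \<longleftrightarrow>
     (\<forall>j<N. \<forall>t\<in>{0..T}. B j t \<in> borel_measurable M) \<and>
     (\<forall>j<N. \<forall>\<omega>\<in>space M. B j 0 \<omega> = 0 \<and> continuous_on {0..T} (\<lambda>t. B j t \<omega>)) \<and>
     (\<forall>s t. 0 \<le> s \<longrightarrow> s < t \<longrightarrow> t \<le> T \<longrightarrow>
        (\<forall>j<N. distributed M lborel (\<lambda>\<omega>. B j t \<omega> - B j s \<omega>) (normal_density 0 (sqrt (t - s)))) \<and>
        prob_space.indep_sets M
          (\<lambda>k. case k of None \<Rightarrow> sigma_sets (space M) (nat_gen M N B s)
                       | Some j \<Rightarrow> {(\<lambda>\<omega>. B j t \<omega> - B j s \<omega>) -` A \<inter> space M | A. A \<in> sets borel})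
          (insert None (Some ` {..<N})))"

definition adapted :: "(real \<Rightarrow> 'a measure) \<Rightarrow> real \<Rightarrow> (real \<Rightarrow> 'a \<Rightarrow> real) \<Rightarrow> bool" where
  "adapted F T X \<longleftrightarrow> (\<forall>t\<in>{0..T}. X t \<in> borel_measurable (F t))"

definition progressive :: "(real \<Rightarrow> 'a measure) \<Rightarrow> real \<Rightarrow> (real \<Rightarrow> 'a \<Rightarrow> real) \<Rightarrow> bool" where
  "progressive F T X \<longleftrightarrow>
     (\<forall>t\<in>{0..T}. (\<lambda>(u, \<omega>). X u \<omega>) \<in> borel_measurable (restrict_space borel {0..t} \<Otimes>\<^sub>M F t))"

definition pred_sigma :: "'a measure \<Rightarrow> (real \<Rightarrow> 'a measure) \<Rightarrow> real \<Rightarrow> (real \<times> 'a) measure" where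
  "pred_sigma M F T = sigma ({0..T} \<times> space M)
     ({{0} \<times> A | A. A \<in> sets (F 0)} \<union>
      {{s<..u} \<times> A | s u A. 0 \<le> s \<and> s < u \<and> u \<le> T \<and> A \<in> sets (F s)})"

definition predictable :: "'a measure \<Rightarrow> (real \<Rightarrow> 'a measure) \<Rightarrow> real \<Rightarrow> (real \<Rightarrow> 'a \<Rightarrow> real) \<Rightarrow> bool" where
  "predictable M F T X \<longleftrightarrow> (\<lambda>(u, \<omega>). X u \<omega>) \<in> borel_measurable (pred_sigma M F T)"

definition simple_ok :: "(real \<Rightarrow> 'a measure) \<Rightarrow> real \<Rightarrow> nat \<Rightarrow> (nat \<Rightarrow> real) \<Rightarrow> (nat \<Rightarrow> 'a \<Rightarrow> real) \<Rightarrow> bool" where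
  "simple_ok F T n p c \<longleftrightarrow> 0 \<le> p 0 \<and> p n \<le> T \<and> (\<forall>k<n. p k < p (Suc k)) \<and>
     (\<forall>k<n. c k \<in> borel_measurable (F (p k)) \<and> (\<exists>C. \<forall>\<omega>\<in>space (F (p k)). \<bar>c k \<omega>\<bar> \<le> C))"

definition simple_proc :: "nat \<Rightarrow> (nat \<Rightarrow> real) \<Rightarrow> (nat \<Rightarrow> 'a \<Rightarrow> real) \<Rightarrow> real \<Rightarrow> 'a \<Rightarrow> real" where
  "simple_proc n p c u \<omega> = (\<Sum>k<n. c k \<omega> * indicator {p k<..p (Suc k)} u)"

definition simple_int :: "(real \<Rightarrow> 'a \<Rightarrow> real) \<Rightarrow> nat \<Rightarrow> (nat \<Rightarrow> real) \<Rightarrow> (nat \<Rightarrow> 'a \<Rightarrow> real) \<Rightarrow> real \<Rightarrow> 'a \<Rightarrow> real" where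
  "simple_int W n p c t \<omega> = (\<Sum>k<n. c k \<omega> * (W (min (p (Suc k)) t) \<omega> - W (min (p k) t) \<omega>))"

definition is_ito_integral :: "'a measure \<Rightarrow> (real \<Rightarrow> 'a measure) \<Rightarrow> real \<Rightarrow> (real \<Rightarrow> 'a \<Rightarrow> real)
      \<Rightarrow> (real \<Rightarrow> 'a \<Rightarrow> real) \<Rightarrow> (real \<Rightarrow> 'a \<Rightarrow> real) \<Rightarrow> bool" where
  "is_ito_integral M F T W X I \<longleftrightarrow>
     (\<forall>\<omega>\<in>space M. continuous_on {0..T} (\<lambda>t. I t \<omega>)) \<and> adapted F T I \<and>
     (\<exists>n p c. (\<forall>k. simple_ok F T (n k) (p k) (c k)) \<and>
        (\<lambda>k. \<integral>\<^sup>+\<omega>. (\<integral>\<^sup>+u\<in>{0..T}. ennreal ((X u \<omega> - simple_proc (n k) (p k) (c k) u \<omega>)\<^sup>2) \<partial>lborel) \<partial>M)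
          \<longlonglongrightarrow> 0 \<and>
        (\<forall>t\<in>{0..T}. (\<lambda>k. \<integral>\<^sup>+\<omega>. ennreal ((simple_int W (n k) (p k) (c k) t \<omega> - I t \<omega>)\<^sup>2) \<partial>M)
          \<longlonglongrightarrow> 0))"

(* psi_T^{(N)}(omega) and phi_s^{(N)}(omega) are both of this form *)
definition min_shift :: "nat \<Rightarrow> (real \<Rightarrow> real) \<Rightarrow> (nat \<Rightarrow> real) \<Rightarrow> real" where
  "min_shift N h x = Inf {y. 0 \<le> y \<and> (\<Sum>i<N. h (y + x i)) / real N \<ge> 0}"

definition flat_solution :: "'a measure \<Rightarrow> (real \<Rightarrow> 'a measure) \<Rightarrow> nat \<Rightarrow> real \<Rightarrow> (nat \<Rightarrow> real \<Rightarrow> 'a \<Rightarrow> real)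
    \<Rightarrow> (real \<Rightarrow> real) \<Rightarrow> (nat \<Rightarrow> 'a \<Rightarrow> real) \<Rightarrow> (nat \<Rightarrow> real \<Rightarrow> 'a \<Rightarrow> real)
    \<Rightarrow> (nat \<Rightarrow> real \<Rightarrow> 'a \<Rightarrow> real) \<Rightarrow> (nat \<Rightarrow> nat \<Rightarrow> real \<Rightarrow> 'a \<Rightarrow> real) \<Rightarrow> (real \<Rightarrow> 'a \<Rightarrow> real) \<Rightarrow> bool" where
  "flat_solution M F N T B h \<theta> f Y Z K \<longleftrightarrow>
     (\<forall>i<N. adapted F T (Y i) \<and> (\<forall>\<omega>\<in>space M. continuous_on {0..T} (\<lambda>t. Y i t \<omega>)) \<and>
            (\<integral>\<^sup>+\<omega>. (SUP t\<in>{0..T}. ennreal ((Y i t \<omega>)\<^sup>2)) \<partial>M) < \<infinity>) \<and>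
     (\<forall>i<N. (\<forall>j<N. predictable M F T (Z i j)) \<and>
            (\<integral>\<^sup>+\<omega>. (\<integral>\<^sup>+u\<in>{0..T}. ennreal (\<Sum>j<N. (Z i j u \<omega>)\<^sup>2) \<partial>lborel) \<partial>M) < \<infinity>) \<and>
     adapted F T K \<and>
     (\<forall>\<omega>\<in>space M. continuous_on {0..T} (\<lambda>t. K t \<omega>) \<and> mono_on {0..T} (\<lambda>t. K t \<omega>) \<and> K 0 \<omega> = 0) \<and>
     (\<integral>\<^sup>+\<omega>. (SUP t\<in>{0..T}. ennreal ((K t \<omega>)\<^sup>2)) \<partial>M) < \<infinity> \<and>
     (\<forall>i<N. \<exists>I. (\<forall>j<N. is_ito_integral M F T (B j) (Z i j) (I j)) \<and>
        (AE \<omega> in M. \<forall>t\<in>{0..T}.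
           Y i t \<omega> = \<theta> i \<omega> + (LINT u:{t..T}|lborel. f i u \<omega>)
                      - (\<Sum>j<N. I j T \<omega> - I j t \<omega>) + K T \<omega> - K t \<omega>)) \<and>
     (AE \<omega> in M. \<forall>t\<in>{0..T}. (\<Sum>i<N. h (Y i t \<omega>)) / real N \<ge> 0) \<and>
     (AE \<omega> in M. (LINT u:{0..T}|interval_measure (\<lambda>u. K (max 0 (min u T)) \<omega>).
                     (\<Sum>i<N. h (Y i u \<omega>)) / real N) = 0)"

definition supermart :: "'a measure \<Rightarrow> (real \<Rightarrow> 'a measure) \<Rightarrow> real \<Rightarrow> (real \<Rightarrow> 'a \<Rightarrow> real) \<Rightarrow> bool" where
  "supermart M F t X \<longleftrightarrow> adapted F t X \<and> (\<forall>s\<in>{0..t}. integrable M (X s)) \<and>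
     (\<forall>s u. 0 \<le> s \<longrightarrow> s \<le> u \<longrightarrow> u \<le> t \<longrightarrow> (AE \<omega> in M. real_cond_exp M (F s) (X u) \<omega> \<le> X s \<omega>))"

definition snell_envelope :: "'a measure \<Rightarrow> (real \<Rightarrow> 'a measure) \<Rightarrow> real \<Rightarrow> (real \<Rightarrow> 'a \<Rightarrow> real)
     \<Rightarrow> (real \<Rightarrow> 'a \<Rightarrow> real) \<Rightarrow> bool" where
  "snell_envelope M F t \<phi> R \<longleftrightarrow>
     supermart M F t R \<and> (\<forall>s\<in>{0..t}. AE \<omega> in M. \<phi> s \<omega> \<le> R s \<omega>) \<and>
     (\<forall>S. supermart M F t S \<longrightarrow> (\<forall>s\<in>{0..t}. AE \<omega> in M. \<phi> s \<omega> \<le> S s \<omega>) \<longrightarrow>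
          (\<forall>s\<in>{0..t}. AE \<omega> in M. R s \<omega> \<le> S s \<omega>))"

end

theory Submission
  imports Defs
begin

(*
  Write R s = E[K t - K s | F s]. Subtracting the BSDE at times s and t and conditioning on F s
  kills the Ito integrals, so Y i s = X i s + R s. Since K is nondecreasing, R is a nonnegative
  supermartingale, and it dominates phi because the constraint holds for Y = X + R.

  For minimality, fix a supermartingale S dominating phi and d > 0, and stop at the first point
  tau_n of the grid of mesh (t - s) / n on [s, t] where sum_i h (Y i) <= d. Before tau_n the
  constraint is strict, so by the Skorokhod condition K does not move there and
  E[K tau_n - K s] -> 0. At tau_n the lower Lipschitz bound on h gives R - phi <= d / (N m), or
  tau_n = t where R vanishes. Discrete optional sampling for S then yields
  E[1_A R s] <= E[1_A S s] + d / (N m) + o(1) for every A in F s.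
*)

section \<open>Minimal shifts\<close>

lemma mono_expansive_increment:
  fixes h :: "real \<Rightarrow> real"
  assumes "mono h" and "\<forall>x y. m * \<bar>x - y\<bar> \<le> \<bar>h x - h y\<bar>" and "y \<le> x"
  shows "h y + m * (x - y) \<le> h x"
proof -
  have "h y \<le> h x" using assms(1,3) by (simp add: monoD)
  moreover have "m * \<bar>x - y\<bar> \<le> \<bar>h x - h y\<bar>" using assms(2) by blast
  ultimately show ?thesis using assms(3) by simp
qed

context
  fixes N :: nat and h :: "real \<Rightarrow> real" and m :: real
  assumes N_pos: "N \<ge> 1" and h_mono: "mono h" and m_pos: "0 < m"
    and h_expansive: "\<forall>x y. m * \<bar>x - y\<bar> \<le> \<bar>h x - h y\<bar>"
begin

private lemma sum_shift_increment:
  assumes "y \<le> r"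
  shows "(\<Sum>i<N. h (y + x i)) + real N * m * (r - y) \<le> (\<Sum>i<N. h (r + x i))"
proof -
  have "(\<Sum>i<N. h (y + x i) + m * (r - y)) \<le> (\<Sum>i<N. h (r + x i))"
  proof (rule sum_mono)
    fix i
    show "h (y + x i) + m * (r - y) \<le> h (r + x i)"
      using mono_expansive_increment[OF h_mono h_expansive, of "y + x i" "r + x i"] assms by simp
  qed
  then show ?thesis by (simp add: sum.distrib)
qed

private lemma min_shift_set_nonempty:
  "{y. 0 \<le> y \<and> (\<Sum>i<N. h (y + x i)) / real N \<ge> 0} \<noteq> {}"
proof -
  define y where "y = max 0 (- (\<Sum>i<N. h (x i)) / (real N * m))"
  have Nm: "real N * m > 0" using N_pos m_pos by simp
  have "- (\<Sum>i<N. h (x i)) / (real N * m) \<le> y" unfolding y_def by simp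
  then have "- (\<Sum>i<N. h (x i)) \<le> real N * m * y"
    using Nm by (simp add: field_simps)
  then have "0 \<le> (\<Sum>i<N. h (0 + x i)) + real N * m * (y - 0)" by simp
  also have "\<dots> \<le> (\<Sum>i<N. h (y + x i))"
    by (rule sum_shift_increment) (simp add: y_def)
  finally show ?thesis by (intro ex_in_conv[THEN iffD1] exI[of _ y]) (simp add: y_def)
qed

lemma min_shift_nonneg: "0 \<le> min_shift N h x"
  unfolding min_shift_def using min_shift_set_nonempty by (rule cInf_greatest) auto

lemma min_shift_le:
  assumes "0 \<le> r" and "0 \<le> (\<Sum>i<N. h (r + x i))"
  shows "min_shift N h x \<le> r"
  unfolding min_shift_def using assms by (intro cInf_lower bdd_belowI[of _ 0]) auto

text \<open>The constant \<open>1 / (N m)\<close> reflects that shifting all arguments by \<open>\<delta>\<close> raises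
  \<open>\<Sum>i<N. h (y + x i)\<close> by at least \<open>N m \<delta>\<close>.\<close>

lemma min_shift_gap:
  assumes "0 \<le> r" and "0 \<le> (\<Sum>i<N. h (r + x i))"
  shows "r - min_shift N h x \<le> (\<Sum>i<N. h (r + x i)) / (real N * m)"
proof -
  define G where "G = (\<Sum>i<N. h (r + x i)) / (real N * m)"
  have Nm: "real N * m > 0" using N_pos m_pos by simp
  have "r - G \<le> min_shift N h x"
    unfolding min_shift_def
  proof (rule cInf_greatest[OF min_shift_set_nonempty])
    fix y assume y: "y \<in> {y. 0 \<le> y \<and> (\<Sum>i<N. h (y + x i)) / real N \<ge> 0}"
    then have "0 \<le> (\<Sum>i<N. h (y + x i))" using N_pos by (simp add: zero_le_divide_iff)
    show "r - G \<le> y"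
    proof (cases "y \<le> r")
      case True
      have "real N * m * (r - y) \<le> (\<Sum>i<N. h (r + x i))"
        using sum_shift_increment[OF True, of x] \<open>0 \<le> (\<Sum>i<N. h (y + x i))\<close> by linarith
      then have "r - y \<le> G" unfolding G_def using Nm by (simp add: pos_le_divide_eq mult.commute)
      then show ?thesis by simp
    next
      case False
      have "0 \<le> G" unfolding G_def using assms Nm by simp
      then show ?thesis using False by simp
    qed
  qed
  then show ?thesis unfolding G_def by simp
qed

end

lemma abs_le_one_plus_square: "\<bar>x :: real\<bar> \<le> 1 + x\<^sup>2"
proof (cases "\<bar>x\<bar> \<le> 1")
  case False
  then have "1 * \<bar>x\<bar> \<le> \<bar>x\<bar> * \<bar>x\<bar>" by (intro mult_right_mono) auto
  then show ?thesis by (simp add: power2_eq_square abs_mult_self_eq)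
qed (simp add: add_increasing2)

lemma abs_integral_indicator_le:
  fixes g :: "'a \<Rightarrow> real"
  assumes A: "A \<in> sets M" and g: "integrable M g"
  shows "\<bar>\<integral>x. indicator A x * g x \<partial>M\<bar> \<le> (\<integral>x. \<bar>g x\<bar> \<partial>M)"
proof -
  have "\<bar>\<integral>x. indicator A x * g x \<partial>M\<bar> \<le> (\<integral>x. \<bar>indicator A x * g x\<bar> \<partial>M)"
    by (rule integral_abs_bound)
  also have "\<dots> \<le> (\<integral>x. \<bar>g x\<bar> \<partial>M)"
    using g integrable_mult_indicator[OF A g] by (intro integral_mono) (auto simp: indicator_def)
  finally show ?thesis .
qed

lemma (in prob_space) integral_abs_le_sqrt_nn_integral_square:
  fixes g :: "'a \<Rightarrow> real"
  assumes g: "g \<in> borel_measurable M" and fin: "(\<integral>\<^sup>+x. ennreal ((g x)\<^sup>2) \<partial>M) < \<infinity>"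
  shows "integrable M g" and "(\<integral>x. \<bar>g x\<bar> \<partial>M) \<le> sqrt (enn2real (\<integral>\<^sup>+x. ennreal ((g x)\<^sup>2) \<partial>M))"
proof -
  have g2: "integrable M (\<lambda>x. (g x)\<^sup>2)" using fin g by (intro integrableI_bounded) auto
  then show gi: "integrable M g" using g square_integrable_imp_integrable by blast
  have "0 \<le> variance (\<lambda>x. \<bar>g x\<bar>)" by (rule variance_positive)
  also have "\<dots> = (\<integral>x. (g x)\<^sup>2 \<partial>M) - (\<integral>x. \<bar>g x\<bar> \<partial>M)\<^sup>2"
    using gi g2 by (subst variance_eq) auto
  finally have "(\<integral>x. \<bar>g x\<bar> \<partial>M)\<^sup>2 \<le> (\<integral>x. (g x)\<^sup>2 \<partial>M)" by simp
  then have "(\<integral>x. \<bar>g x\<bar> \<partial>M) \<le> sqrt (\<integral>x. (g x)\<^sup>2 \<partial>M)"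
    using real_le_rsqrt by blast
  moreover have "(\<integral>x. (g x)\<^sup>2 \<partial>M) = enn2real (\<integral>\<^sup>+x. ennreal ((g x)\<^sup>2) \<partial>M)"
    using g2 by (subst integral_eq_nn_integral) auto
  ultimately show "(\<integral>x. \<bar>g x\<bar> \<partial>M) \<le> sqrt (enn2real (\<integral>\<^sup>+x. ennreal ((g x)\<^sup>2) \<partial>M))" by simp
qed

lemma (in prob_space) integrable_of_nn_integral_SUP_square:
  fixes g :: "real \<Rightarrow> 'a \<Rightarrow> real"
  assumes "g u \<in> borel_measurable M" and "u \<in> U"
    and "(\<integral>\<^sup>+\<omega>. (SUP v\<in>U. ennreal ((g v \<omega>)\<^sup>2)) \<partial>M) < \<infinity>"
  shows "integrable M (g u)"
proof -
  have "(\<integral>\<^sup>+\<omega>. ennreal ((g u \<omega>)\<^sup>2) \<partial>M) \<le> (\<integral>\<^sup>+\<omega>. (SUP v\<in>U. ennreal ((g v \<omega>)\<^sup>2)) \<partial>M)"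
    using assms(2) by (intro nn_integral_mono) (auto intro: SUP_upper)
  then show ?thesis
    using integral_abs_le_sqrt_nn_integral_square(1)[OF assms(1)] assms(3) by simp
qed

lemma set_integral_Icc_diff:
  fixes g :: "real \<Rightarrow> real"
  assumes g: "set_integrable lborel {a..c} g" and "a \<le> s" "s \<le> t" "t \<le> c"
  shows "(LINT u:{s..c}|lborel. g u) - (LINT u:{t..c}|lborel. g u) = (LINT u:{s..t}|lborel. g u)"
proof -
  have "(LINT u:{s..t} \<union> {t..c}|lborel. g u) = (LINT u:{s..t}|lborel. g u) + (LINT u:{t..c}|lborel. g u)"
  proof (rule set_integral_Un_AE)
    show "AE x in lborel. \<not> (x \<in> {s..t} \<and> x \<in> {t..c})"
      using AE_lborel_singleton[of t] by (rule AE_mp) (auto intro!: AE_I2)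
  qed (use set_integrable_subset[OF g] assms in auto)
  moreover have "{s..t} \<union> {t..c} = {s..c}" using assms by auto
  ultimately show ?thesis by simp
qed

lemma AE_le_of_integral_indicator_le:
  fixes g1 g2 :: "'a \<Rightarrow> real"
  assumes sub: "subalgebra M F"
    and meas: "g1 \<in> borel_measurable F" "g2 \<in> borel_measurable F"
    and int: "integrable M g1" "integrable M g2"
    and le: "\<And>A. A \<in> sets F \<Longrightarrow> (\<integral>x. indicator A x * g1 x \<partial>M) \<le> (\<integral>x. indicator A x * g2 x \<partial>M)"
  shows "AE x in M. g1 x \<le> g2 x"
proof -
  define A where "A = {x \<in> space M. g2 x < g1 x}"
  have "{x \<in> space F. g2 x < g1 x} \<in> sets F" using meas by measurable
  then have AF: "A \<in> sets F" unfolding A_def using sub by (simp add: subalgebra_def)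
  then have AM: "A \<in> sets M" using sub by (auto simp: subalgebra_def)
  have i: "integrable M (\<lambda>x. indicator A x * (g1 x - g2 x))"
    using integrable_mult_indicator[OF AM Bochner_Integration.integrable_diff[OF int]] by simp
  have nn: "0 \<le> indicator A x * (g1 x - g2 x)" for x unfolding A_def by (auto simp: indicator_def)
  have "(\<integral>x. indicator A x * (g1 x - g2 x) \<partial>M)
      = (\<integral>x. indicator A x * g1 x \<partial>M) - (\<integral>x. indicator A x * g2 x \<partial>M)"
    using integrable_mult_indicator[OF AM int(1)] integrable_mult_indicator[OF AM int(2)]
    by (simp add: right_diff_distrib)
  also have "\<dots> \<le> 0" using le[OF AF] by simp
  finally have "(\<integral>x. indicator A x * (g1 x - g2 x) \<partial>M) = 0"
    using nn by (simp add: Bochner_Integration.integral_nonneg antisym)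
  then have "AE x in M. indicator A x * (g1 x - g2 x) = 0"
    using i nn by (subst (asm) integral_nonneg_eq_0_iff_AE) auto
  then show ?thesis by (rule AE_mp) (intro AE_I2, auto simp: A_def indicator_def)
qed

lemma (in sigma_finite_subalgebra) integral_indicator_real_cond_exp:
  assumes "integrable M g" and "A \<in> sets F"
  shows "(\<integral>x. indicator A x * real_cond_exp M F g x \<partial>M) = (\<integral>x. indicator A x * g x \<partial>M)"
  using real_cond_exp_intA[OF assms] unfolding set_lebesgue_integral_def by simp

lemma (in prob_space) indep_set_completion:
  assumes A: "sigma_algebra (space M) A" "A \<subseteq> events"
    and C: "C \<subseteq> events" "Int_stable C" and ind: "indep_set A C"
  shows "indep_set (sigma_sets (space M) (A \<union> null_sets M)) (sigma_sets (space M) C)"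
proof -
  interpret A: sigma_algebra "space M" A by (rule A(1))
  have "indep_set (A \<union> null_sets M) C"
  proof (rule indep_setI)
    show "A \<union> null_sets M \<subseteq> events" using A(2) by auto
    fix a c assume a: "a \<in> A \<union> null_sets M" and c: "c \<in> C"
    show "prob (a \<inter> c) = prob a * prob c"
    proof (cases "a \<in> A")
      case True then show ?thesis using indep_setD[OF ind True c] by simp
    next
      case False
      then have "a \<in> null_sets M" using a by simp
      moreover have "a \<inter> c \<in> null_sets M" using calculation c C(1) by (blast intro: null_set_Int2)
      ultimately show ?thesis by (simp add: measure_def null_setsD1)
    qed
  qed (use C in simp)
  moreover have "Int_stable (A \<union> null_sets M)"
  proof (rule Int_stableI)
    fix a b assume ab: "a \<in> A \<union> null_sets M" "b \<in> A \<union> null_sets M"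
    then have "a \<in> events" "b \<in> events" using A(2) by auto
    then show "a \<inter> b \<in> A \<union> null_sets M"
      using ab by (auto intro: null_set_Int1 null_set_Int2)
  qed
  ultimately have "indep_sets (\<lambda>i. sigma_sets (space M) (case_bool (A \<union> null_sets M) C i)) UNIV"
    unfolding indep_set_def using C(2) by (intro indep_sets_sigma) (auto split: bool.split)
  then show ?thesis
    unfolding indep_set_def by (rule indep_sets_mono_sets) (auto split: bool.split)
qed

lemma integral_at_random_index:
  fixes X :: "nat \<Rightarrow> 'a \<Rightarrow> real" and \<tau> :: "'a \<Rightarrow> nat"
  assumes \<tau>_le: "\<And>\<omega>. \<omega> \<in> space M \<Longrightarrow> \<tau> \<omega> \<le> n"
    and E: "\<And>j. j \<le> n \<Longrightarrow> {\<omega> \<in> space M. \<tau> \<omega> = j} \<in> sets M"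
    and X: "\<And>j. j \<le> n \<Longrightarrow> integrable M (X j)"
  shows "integrable M (\<lambda>\<omega>. X (\<tau> \<omega>) \<omega>)"
    and "(\<integral>\<omega>. X (\<tau> \<omega>) \<omega> \<partial>M) = (\<Sum>j\<le>n. \<integral>\<omega>. indicator {\<omega> \<in> space M. \<tau> \<omega> = j} \<omega> * X j \<omega> \<partial>M)"
proof -
  have eq: "X (\<tau> \<omega>) \<omega> = (\<Sum>j\<le>n. indicator {\<omega> \<in> space M. \<tau> \<omega> = j} \<omega> * X j \<omega>)"
    if "\<omega> \<in> space M" for \<omega>
  proof -
    have "(\<Sum>j\<le>n. indicator {\<omega> \<in> space M. \<tau> \<omega> = j} \<omega> * X j \<omega>)
        = (\<Sum>j\<le>n. if j = \<tau> \<omega> then X j \<omega> else 0)"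
      using that by (intro sum.cong) auto
    also have "\<dots> = X (\<tau> \<omega>) \<omega>" using \<tau>_le[OF that] by (simp add: sum.delta')
    finally show ?thesis by simp
  qed
  have i: "integrable M (\<lambda>\<omega>. indicator {\<omega> \<in> space M. \<tau> \<omega> = j} \<omega> * X j \<omega>)" if "j \<le> n" for j
    using integrable_mult_indicator[OF E X] that by simp
  have "integrable M (\<lambda>\<omega>. \<Sum>j\<le>n. indicator {\<omega> \<in> space M. \<tau> \<omega> = j} \<omega> * X j \<omega>)"
    using i by (intro Bochner_Integration.integrable_sum) auto
  then show "integrable M (\<lambda>\<omega>. X (\<tau> \<omega>) \<omega>)"
    by (subst Bochner_Integration.integrable_cong[OF refl eq]) auto
  have "(\<integral>\<omega>. X (\<tau> \<omega>) \<omega> \<partial>M)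
      = (\<integral>\<omega>. (\<Sum>j\<le>n. indicator {\<omega> \<in> space M. \<tau> \<omega> = j} \<omega> * X j \<omega>) \<partial>M)"
    by (rule Bochner_Integration.integral_cong[OF refl eq])
  also have "\<dots> = (\<Sum>j\<le>n. \<integral>\<omega>. indicator {\<omega> \<in> space M. \<tau> \<omega> = j} \<omega> * X j \<omega> \<partial>M)"
    using i by (intro Bochner_Integration.integral_sum) simp
  finally show "(\<integral>\<omega>. X (\<tau> \<omega>) \<omega> \<partial>M)
      = (\<Sum>j\<le>n. \<integral>\<omega>. indicator {\<omega> \<in> space M. \<tau> \<omega> = j} \<omega> * X j \<omega> \<partial>M)" .
qed

text \<open>Discrete optional sampling; the supermartingale inequality is only needed on the events
  \<open>{j < \<tau>}\<close>.\<close>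

lemma integral_at_stopping_index_le:
  fixes X :: "nat \<Rightarrow> 'a \<Rightarrow> real" and \<tau> :: "'a \<Rightarrow> nat"
  assumes \<tau>_le: "\<And>\<omega>. \<omega> \<in> space M \<Longrightarrow> \<tau> \<omega> \<le> n"
    and X: "\<And>j. j \<le> n \<Longrightarrow> integrable M (X j)"
    and C: "\<And>j. j < n \<Longrightarrow> {\<omega> \<in> space M. j < \<tau> \<omega>} \<in> sets M"
    and super: "\<And>j. j < n \<Longrightarrow>
      (\<integral>\<omega>. indicator {\<omega> \<in> space M. j < \<tau> \<omega>} \<omega> * X (Suc j) \<omega> \<partial>M)
        \<le> (\<integral>\<omega>. indicator {\<omega> \<in> space M. j < \<tau> \<omega>} \<omega> * X j \<omega> \<partial>M)"
  shows "(\<integral>\<omega>. X (\<tau> \<omega>) \<omega> \<partial>M) \<le> (\<integral>\<omega>. X 0 \<omega> \<partial>M)"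
proof -
  define C' where "C' j = {\<omega> \<in> space M. j < \<tau> \<omega>}" for j
  define D where "D j \<omega> = indicator (C' j) \<omega> * X (Suc j) \<omega> - indicator (C' j) \<omega> * X j \<omega>" for j \<omega>
  have step: "X (min (Suc j) (\<tau> \<omega>)) \<omega> = X (min j (\<tau> \<omega>)) \<omega> + D j \<omega>" if "\<omega> \<in> space M" for j \<omega>
    using that by (cases "j < \<tau> \<omega>") (auto simp: C'_def D_def min_def)
  have "integrable M (\<lambda>\<omega>. X (min k (\<tau> \<omega>)) \<omega>) \<and>
      (\<integral>\<omega>. X (min k (\<tau> \<omega>)) \<omega> \<partial>M) \<le> (\<integral>\<omega>. X 0 \<omega> \<partial>M)" if "k \<le> n" for k
    using that
  proof (induction k)
    case 0
    then show ?case using X[of 0] by simp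
  next
    case (Suc k)
    have "integrable M (\<lambda>\<omega>. indicator (C' k) \<omega> * X (Suc k) \<omega>)"
      "integrable M (\<lambda>\<omega>. indicator (C' k) \<omega> * X k \<omega>)"
      using integrable_mult_indicator[OF C X] Suc.prems unfolding C'_def by simp_all
    then have iD: "integrable M (D k)" and intD: "(\<integral>\<omega>. D k \<omega> \<partial>M) \<le> 0"
      using super[of k] Suc.prems unfolding D_def C'_def by auto
    have IH: "integrable M (\<lambda>\<omega>. X (min k (\<tau> \<omega>)) \<omega>)"
      "(\<integral>\<omega>. X (min k (\<tau> \<omega>)) \<omega> \<partial>M) \<le> (\<integral>\<omega>. X 0 \<omega> \<partial>M)" using Suc by auto
    have "integrable M (\<lambda>\<omega>. X (min k (\<tau> \<omega>)) \<omega> + D k \<omega>)" using IH(1) iD by simp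
    moreover have "(\<integral>\<omega>. X (min k (\<tau> \<omega>)) \<omega> + D k \<omega> \<partial>M) \<le> (\<integral>\<omega>. X 0 \<omega> \<partial>M)"
      using IH iD intD by simp
    moreover have "integrable M (\<lambda>\<omega>. X (min (Suc k) (\<tau> \<omega>)) \<omega>)
        \<longleftrightarrow> integrable M (\<lambda>\<omega>. X (min k (\<tau> \<omega>)) \<omega> + D k \<omega>)"
      by (intro Bochner_Integration.integrable_cong) (auto simp: step)
    moreover have "(\<integral>\<omega>. X (min (Suc k) (\<tau> \<omega>)) \<omega> \<partial>M) = (\<integral>\<omega>. X (min k (\<tau> \<omega>)) \<omega> + D k \<omega> \<partial>M)"
      by (intro Bochner_Integration.integral_cong) (auto simp: step)
    ultimately show ?case by simp
  qed
  moreover have "(\<integral>\<omega>. X (min n (\<tau> \<omega>)) \<omega> \<partial>M) = (\<integral>\<omega>. X (\<tau> \<omega>) \<omega> \<partial>M)"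
    using \<tau>_le by (intro Bochner_Integration.integral_cong) (auto simp: min_absorb2)
  ultimately show ?thesis by fastforce
qed

lemma snell_envelope_AE_unique:
  assumes "snell_envelope M F t \<phi> R1" and "snell_envelope M F t \<phi> R2" and "s \<in> {0..t}"
  shows "AE \<omega> in M. R1 s \<omega> = R2 s \<omega>"
proof -
  have "AE \<omega> in M. R1 s \<omega> \<le> R2 s \<omega>" and "AE \<omega> in M. R2 s \<omega> \<le> R1 s \<omega>"
    using assms unfolding snell_envelope_def by blast+
  then show ?thesis by eventually_elim simp
qed

section \<open>Monotone paths sampled on a grid\<close>

lemma emeasure_interval_measure_clamped:
  fixes k :: "real \<Rightarrow> real"
  assumes kc: "continuous_on {0..T} k" and km: "mono_on {0..T} k" and T: "0 \<le> T" and xy: "x \<le> y"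
  shows "emeasure (interval_measure (\<lambda>u. k (max 0 (min u T)))) {x<..y}
    = ennreal (k (max 0 (min y T)) - k (max 0 (min x T)))"
proof (rule emeasure_interval_measure_Ioc[OF xy])
  show "k (max 0 (min a T)) \<le> k (max 0 (min b T))" if "a \<le> b" for a b
    by (rule mono_onD[OF km]) (use that T in \<open>auto simp: max_def min_def\<close>)
  have "continuous_on UNIV (\<lambda>u. k (max 0 (min u T)))"
    by (rule continuous_on_compose2[OF kc]) (use T in \<open>auto intro!: continuous_intros\<close>)
  then show "continuous (at_right a) (\<lambda>u. k (max 0 (min u T)))" for a
    by (simp add: continuous_on_eq_continuous_at continuous_at_imp_continuous_at_within)
qed

lemma interval_measure_integral_zero_imp_flat:
  fixes k g :: "real \<Rightarrow> real"
  assumes kc: "continuous_on {0..T} k" and km: "mono_on {0..T} k"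
    and gc: "continuous_on {0..T} g" and g_nonneg: "\<forall>u\<in>{0..T}. 0 \<le> g u"
    and zero: "(LINT u:{0..T}|interval_measure (\<lambda>u. k (max 0 (min u T))). g u) = 0"
    and ab: "0 \<le> a" "a \<le> b" "b \<le> T" and pos: "\<forall>v\<in>{a..b}. 0 < g v"
  shows "k b = k a"
proof -
  define F where "F u = k (max 0 (min u T))" for u
  define \<mu> where "\<mu> = interval_measure F"
  have sets_\<mu> [simp]: "sets \<mu> = sets borel" unfolding \<mu>_def by simp
  have T0: "0 \<le> T" using ab by simp
  have F_mono: "F x \<le> F y" if "x \<le> y" for x y
    unfolding F_def by (rule mono_onD[OF km]) (use that T0 in \<open>auto simp: max_def min_def\<close>)
  have Ioc: "emeasure \<mu> {x<..y} = ennreal (F y - F x)" if "x \<le> y" for x y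
    unfolding \<mu>_def F_def using emeasure_interval_measure_clamped[OF kc km T0 that] .
  obtain x0 where x0: "x0 \<in> {a..b}" "\<forall>y\<in>{a..b}. g x0 \<le> g y"
    using continuous_attains_inf[of "{a..b}" g] ab continuous_on_subset[OF gc] by auto
  define c where "c = g x0"
  have c_pos: "0 < c" unfolding c_def using pos x0 by auto
  have "bounded (g ` {0..T})" by (rule compact_imp_bounded[OF compact_continuous_image[OF gc]]) simp
  then obtain C where C: "C > 0" "\<forall>y\<in>g ` {0..T}. norm y \<le> C" unfolding bounded_pos by blast
  have fin: "emeasure \<mu> {x<..y} < \<infinity>" if "x \<le> y" for x y using Ioc[OF that] by simp
  have i1: "integrable \<mu> (\<lambda>u. c * indicator {a<..b} u)"
    using fin[OF ab(2)] by (intro integrable_mult_right) auto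
  have i2: "integrable \<mu> (\<lambda>u. indicator {0..T} u *\<^sub>R g u)"
  proof (rule Bochner_Integration.integrable_bound[of \<mu> "\<lambda>u. C * indicator {-1<..T} u"])
    show "integrable \<mu> (\<lambda>u. C * indicator {-1<..T} u)"
      using fin[of "-1" T] T0 by (intro integrable_mult_right) auto
    show "(\<lambda>u. indicator {0..T} u *\<^sub>R g u) \<in> borel_measurable \<mu>"
      using borel_measurable_continuous_on_indicator[OF _ gc] by (simp add: \<mu>_def cong: measurable_cong_sets)
    show "AE x in \<mu>. norm (indicator {0..T} x *\<^sub>R g x) \<le> norm (C * indicator {- 1<..T} x)"
      using C by (intro AE_I2) (auto simp: indicator_def)
  qed
  have "c * (k b - k a) = (\<integral>u. c * indicator {a<..b} u \<partial>\<mu>)"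
  proof -
    have "measure \<mu> {a<..b} = F b - F a"
      unfolding measure_def using Ioc[OF ab(2)] F_mono[OF ab(2)] by simp
    moreover have "F b = k b" "F a = k a" unfolding F_def using ab by (auto simp: max_def min_def)
    ultimately show ?thesis using Ioc[OF ab(2)] by simp
  qed
  also have "\<dots> \<le> (\<integral>u. indicator {0..T} u *\<^sub>R g u \<partial>\<mu>)"
  proof (rule integral_mono[OF i1 i2])
    fix u
    show "c * indicator {a<..b} u \<le> indicator {0..T} u *\<^sub>R g u"
      using x0 pos g_nonneg ab unfolding c_def by (auto simp: indicator_def)
  qed
  also have "\<dots> = 0"
    using zero unfolding set_lebesgue_integral_def \<mu>_def F_def .
  finally have "k b \<le> k a" using c_pos by (simp add: mult_le_0_iff)
  moreover have "k a \<le> k b" using mono_onD[OF km] ab by auto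
  ultimately show ?thesis by simp
qed

definition grid :: "real \<Rightarrow> real \<Rightarrow> nat \<Rightarrow> nat \<Rightarrow> real" where
  "grid s t n j = s + real j * (t - s) / real n"

lemma grid_0 [simp]: "grid s t n 0 = s"
  unfolding grid_def by simp

lemma grid_last: "n \<ge> 1 \<Longrightarrow> grid s t n n = t"
  unfolding grid_def by simp

lemma grid_mono: "s \<le> t \<Longrightarrow> i \<le> j \<Longrightarrow> grid s t n i \<le> grid s t n j"
  unfolding grid_def by (auto intro!: divide_right_mono mult_right_mono)

lemma grid_in_Icc:
  assumes "s \<le> t" and "j \<le> n"
  shows "grid s t n j \<in> {s..t}"
proof -
  have "real j * (t - s) / real n \<le> t - s"
  proof (cases "n = 0")
    case False
    have "real j * (t - s) \<le> real n * (t - s)" using assms by (intro mult_right_mono) auto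
    then show ?thesis using False by (simp add: divide_le_eq mult.commute)
  qed (use assms in simp)
  then show ?thesis unfolding grid_def using assms by simp
qed

lemma grid_above:
  assumes "z \<in> {s..t}" and "n \<ge> 1"
  obtains j where "j \<le> n" "z \<le> grid s t n j" "grid s t n j - z \<le> (t - s) / real n"
proof -
  define j where "j = (LEAST j. z \<le> grid s t n j)"
  have ex: "z \<le> grid s t n n" using grid_last[OF assms(2)] assms(1) by simp
  have "j \<le> n" unfolding j_def by (rule Least_le) (rule ex)
  moreover have "z \<le> grid s t n j" unfolding j_def by (rule LeastI[of _ n]) (rule ex)
  moreover have "grid s t n j - z \<le> (t - s) / real n"
  proof (cases j)
    case 0
    then show ?thesis using assms \<open>z \<le> grid s t n j\<close> by simp
  next
    case (Suc i)
    have "\<not> z \<le> grid s t n i" unfolding j_def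
      by (rule not_less_Least) (simp add: Suc j_def[symmetric])
    moreover have "grid s t n j = grid s t n i + (t - s) / real n"
      unfolding grid_def Suc by (simp add: add_divide_distrib[symmetric] algebra_simps)
    ultimately show ?thesis by simp
  qed
  ultimately show ?thesis using that by blast
qed

lemma eventually_grid_near:
  assumes z: "z \<in> {s..t}" and \<delta>: "0 < \<delta>"
  shows "\<forall>\<^sub>F n in sequentially. \<exists>j\<le>n. dist (grid s t n j) z < \<delta>"
proof -
  have "((\<lambda>n. (t - s) / real n) \<longlongrightarrow> 0) sequentially"
    by (intro tendsto_divide_0[OF tendsto_const] filterlim_at_top_imp_at_infinity filterlim_real_sequentially)
  then have "\<forall>\<^sub>F n in sequentially. (t - s) / real n < \<delta>" using \<delta> by (rule order_tendstoD)
  then show ?thesis using eventually_ge_at_top[of 1]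
  proof eventually_elim
    case (elim n)
    then obtain j where "j \<le> n" "z \<le> grid s t n j" "grid s t n j - z \<le> (t - s) / real n"
      using grid_above[OF z] by blast
    then show ?case using elim by (intro exI[of _ j]) (simp add: dist_real_def)
  qed
qed

definition grid_hitting_index :: "(real \<Rightarrow> real) \<Rightarrow> real \<Rightarrow> real \<Rightarrow> real \<Rightarrow> nat \<Rightarrow> nat" where
  "grid_hitting_index G d s t n = (LEAST j. j = n \<or> G (grid s t n j) \<le> d)"

lemma grid_hitting_index_le: "grid_hitting_index G d s t n \<le> n"
  unfolding grid_hitting_index_def by (rule Least_le) simp

lemma grid_hitting_index_hits:
  "grid_hitting_index G d s t n = n \<or> G (grid s t n (grid_hitting_index G d s t n)) \<le> d"
  unfolding grid_hitting_index_def by (rule LeastI[of _ n]) simp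

lemma grid_hitting_index_le_if: "G (grid s t n j) \<le> d \<Longrightarrow> grid_hitting_index G d s t n \<le> j"
  unfolding grid_hitting_index_def by (rule Least_le) simp

lemma le_grid_hitting_index_iff:
  "j \<le> grid_hitting_index G d s t n \<longleftrightarrow> (\<forall>i<j. i \<noteq> n \<and> d < G (grid s t n i))"
proof
  assume j: "j \<le> grid_hitting_index G d s t n"
  show "\<forall>i<j. i \<noteq> n \<and> d < G (grid s t n i)"
  proof (intro allI impI)
    fix i assume "i < j"
    then have "\<not> (i = n \<or> G (grid s t n i) \<le> d)"
      using j unfolding grid_hitting_index_def by (intro not_less_Least) simp
    then show "i \<noteq> n \<and> d < G (grid s t n i)" by simp
  qed
next
  assume H: "\<forall>i<j. i \<noteq> n \<and> d < G (grid s t n i)"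
  show "j \<le> grid_hitting_index G d s t n"
  proof (rule ccontr)
    assume "\<not> j \<le> grid_hitting_index G d s t n"
    then show False using H grid_hitting_index_hits[of G d s t n] by (meson not_le not_less)
  qed
qed

lemma flat_up_to_first_nonpositive:
  fixes k G :: "real \<Rightarrow> real"
  assumes kc: "continuous_on {s..t} k" and km: "mono_on {s..t} k" and Gc: "continuous_on {s..t} G"
    and flat: "\<And>a b. s \<le> a \<Longrightarrow> a \<le> b \<Longrightarrow> b \<le> t \<Longrightarrow> (\<forall>v\<in>{a..b}. 0 < G v) \<Longrightarrow> k b = k a"
    and not_pos: "\<not> (\<forall>v\<in>{s..t}. 0 < G v)"
  obtains z where "z \<in> {s..t}" "G z \<le> 0" "k z = k s"
proof -
  define Z where "Z = {s..t} \<inter> G -` {..0}"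
  have "Z \<noteq> {}" using not_pos unfolding Z_def by (auto simp: not_less)
  moreover have Z_bdd: "bdd_below Z" unfolding Z_def by (rule bdd_belowI[of _ s]) auto
  moreover have "closed Z" unfolding Z_def by (rule continuous_closed_preimage[OF Gc]) auto
  ultimately have "Inf Z \<in> Z" by (rule closed_contains_Inf)
  define z where "z = Inf Z"
  have z: "z \<in> {s..t}" "G z \<le> 0" using \<open>Inf Z \<in> Z\<close> unfolding z_def Z_def by auto
  have "k z \<le> k s"
  proof (cases "s < z")
    case True
    have below: "0 < G w" if "w \<in> {s..t}" "w < z" for w
    proof (rule ccontr)
      assume "\<not> 0 < G w"
      then have "w \<in> Z" using that unfolding Z_def by auto
      then show False using cInf_lower[OF _ Z_bdd, of w] that unfolding z_def by simp
    qed
    have flat_before_z: "k v \<le> k s" if v: "v \<in> {s..<z}" for v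
    proof -
      have "s \<le> v" "v \<le> t" using v z(1) by auto
      moreover have "\<forall>w\<in>{s..v}. 0 < G w" using v z(1) by (intro ballI below) auto
      ultimately show ?thesis using flat[of s v] by simp
    qed
    have "{s..<z} \<subseteq> {s..t} \<inter> k -` {..k s}" using z(1) flat_before_z by auto
    moreover have "closed ({s..t} \<inter> k -` {..k s})" by (rule continuous_closed_preimage[OF kc]) auto
    ultimately have "closure {s..<z} \<subseteq> {s..t} \<inter> k -` {..k s}" by (rule closure_minimal)
    moreover have "z \<in> closure {s..<z}" using True by simp
    ultimately have "z \<in> {s..t} \<inter> k -` {..k s}" by (rule subsetD)
    then show ?thesis by simp
  next
    case False
    then show ?thesis using z by simp
  qed
  moreover have "k s \<le> k z" using mono_onD[OF km] z by auto
  ultimately show ?thesis using that z by simp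
qed

lemma tendsto_at_grid_hitting_index:
  fixes k G :: "real \<Rightarrow> real"
  assumes st: "s \<le> t" and kc: "continuous_on {s..t} k" and km: "mono_on {s..t} k"
    and Gc: "continuous_on {s..t} G" and d: "0 < d"
    and flat: "\<And>a b. s \<le> a \<Longrightarrow> a \<le> b \<Longrightarrow> b \<le> t \<Longrightarrow> (\<forall>v\<in>{a..b}. 0 < G v) \<Longrightarrow> k b = k a"
  shows "(\<lambda>n. k (grid s t n (grid_hitting_index G d s t n))) \<longlonglongrightarrow> k s"
proof -
  define \<tau> where "\<tau> n = grid s t n (grid_hitting_index G d s t n)" for n
  have \<tau>: "\<tau> n \<in> {s..t}" for n unfolding \<tau>_def using grid_in_Icc[OF st grid_hitting_index_le] .
  have k_lower: "k s \<le> k (\<tau> n)" for n using mono_onD[OF km] \<tau>[of n] st by auto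
  show ?thesis unfolding \<tau>_def[symmetric]
  proof (cases "\<forall>v\<in>{s..t}. 0 < G v")
    case True
    then have kt: "k t = k s" using flat[OF order.refl st order.refl] by blast
    have "k (\<tau> n) = k s" for n
      using mono_onD[OF km, of "\<tau> n" t] \<tau>[of n] st k_lower[of n] kt by auto
    then show "(\<lambda>n. k (\<tau> n)) \<longlonglongrightarrow> k s" by simp
  next
    case False
    then obtain z where z: "z \<in> {s..t}" "G z \<le> 0" "k z = k s"
      using flat_up_to_first_nonpositive[OF kc km Gc flat] by blast
    show "(\<lambda>n. k (\<tau> n)) \<longlonglongrightarrow> k s"
    proof (rule tendstoI)
      fix \<eta> :: real assume "0 < \<eta>"
      obtain \<delta>1 where \<delta>1: "\<delta>1 > 0" "\<forall>x\<in>{s..t}. dist x z < \<delta>1 \<longrightarrow> dist (k x) (k z) < \<eta>"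
        using kc z(1) \<open>0 < \<eta>\<close> unfolding continuous_on_iff by blast
      obtain \<delta>2 where \<delta>2: "\<delta>2 > 0" "\<forall>x\<in>{s..t}. dist x z < \<delta>2 \<longrightarrow> dist (G x) (G z) < d"
        using Gc z(1) d unfolding continuous_on_iff by blast
      have "0 < min \<delta>1 \<delta>2" using \<delta>1 \<delta>2 by simp
      from eventually_grid_near[OF z(1) this]
      show "\<forall>\<^sub>F n in sequentially. dist (k (\<tau> n)) (k s) < \<eta>"
      proof eventually_elim
        case (elim n)
        then obtain j where j: "j \<le> n" "dist (grid s t n j) z < \<delta>1" "dist (grid s t n j) z < \<delta>2" by auto
        have g: "grid s t n j \<in> {s..t}" using grid_in_Icc[OF st j(1)] .
        then have "dist (G (grid s t n j)) (G z) < d" using \<delta>2(2) j(3) by blast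
        then have "G (grid s t n j) \<le> d" using z(2) by (simp add: dist_real_def abs_less_iff)
        then have "\<tau> n \<le> grid s t n j"
          unfolding \<tau>_def by (intro grid_mono[OF st] grid_hitting_index_le_if)
        then have "k (\<tau> n) \<le> k (grid s t n j)" using mono_onD[OF km] \<tau>[of n] g by auto
        moreover have "dist (k (grid s t n j)) (k z) < \<eta>" using \<delta>1(2) g j(2) by blast
        ultimately show ?case using z(3) k_lower[of n] by (simp add: dist_real_def abs_less_iff)
      qed
    qed
  qed
qed

section \<open>Brownian filtration and Ito integrals\<close>

lemma increment_min_max:
  fixes W :: "real \<Rightarrow> real"
  assumes "a < b" "s \<le> t"
  shows "W (min b t) - W (min a t) - (W (min b s) - W (min a s)) =
         W (max s (min b t)) - W (max s (min a t))"
  using assms by (cases "b \<le> s"; cases "a \<le> s"; cases "b \<le> t"; cases "a \<le> t") (simp_all add: min_def max_def)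

text \<open>\<open>\<F> s\<close> is a sub-\<open>\<sigma>\<close>-algebra of the events only for \<open>s \<le> T\<close>.\<close>

locale brownian_filtration = prob_space M for M :: "'a measure" +
  fixes N :: nat and T :: real and B :: "nat \<Rightarrow> real \<Rightarrow> 'a \<Rightarrow> real"
  assumes T_pos: "0 < T" and brownian: "indep_std_BMs M N T B"
begin

abbreviation \<F> :: "real \<Rightarrow> 'a measure" where
  "\<F> \<equiv> aug_filt M N B"

lemma measurable_B: "j < N \<Longrightarrow> 0 \<le> u \<Longrightarrow> u \<le> T \<Longrightarrow> B j u \<in> borel_measurable M"
  using brownian unfolding indep_std_BMs_def by auto

lemma nat_gen_subset_events: "s \<le> T \<Longrightarrow> nat_gen M N B s \<subseteq> events"
  unfolding nat_gen_def using measurable_B by (auto intro!: measurable_sets)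

lemma sets_\<F>:
  assumes "s \<le> T"
  shows "sets (\<F> s) = sigma_sets (space M) (nat_gen M N B s \<union> null_sets M)"
proof -
  have "nat_gen M N B s \<union> null_sets M \<subseteq> events" using nat_gen_subset_events[OF assms] by auto
  then have "nat_gen M N B s \<union> null_sets M \<subseteq> Pow (space M)" using sets.sets_into_space by blast
  then show ?thesis unfolding aug_filt_def by (simp add: sets_measure_of)
qed

lemma space_\<F> [simp]: "space (\<F> s) = space M"
  unfolding aug_filt_def by (simp add: space_measure_of_conv)

lemma subalgebra_\<F>: "s \<le> T \<Longrightarrow> subalgebra M (\<F> s)"
  unfolding subalgebra_def sets_\<F> using nat_gen_subset_events
  by (auto intro!: sets.sigma_sets_subset dest: null_setsD1)

lemma sigma_finite_subalgebra_\<F>: "s \<le> T \<Longrightarrow> sigma_finite_subalgebra M (\<F> s)"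
  using subalgebra_\<F> finite_measure_axioms
  by (intro finite_measure_subalgebra_is_sigma_finite)
    (simp add: finite_measure_subalgebra_def finite_measure_subalgebra_axioms_def)

lemma sets_\<F>_subset: "s \<le> T \<Longrightarrow> sets (\<F> s) \<subseteq> events"
  using subalgebra_\<F> by (simp add: subalgebra_def)

lemma sets_\<F>_mono: "s \<le> u \<Longrightarrow> u \<le> T \<Longrightarrow> sets (\<F> s) \<subseteq> sets (\<F> u)"
proof -
  assume su: "s \<le> u" "u \<le> T"
  have "nat_gen M N B s \<subseteq> nat_gen M N B u" using su(1) unfolding nat_gen_def by fastforce
  then show ?thesis unfolding sets_\<F>[OF su(2)] sets_\<F>[OF order.trans[OF su]]
    by (intro sigma_sets_mono') auto
qed

lemma subalgebra_\<F>_mono: "s \<le> u \<Longrightarrow> u \<le> T \<Longrightarrow> subalgebra (\<F> u) (\<F> s)"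
  unfolding subalgebra_def using sets_\<F>_mono by simp

lemma measurable_\<F>_imp_M: "X \<in> borel_measurable (\<F> s) \<Longrightarrow> s \<le> T \<Longrightarrow> X \<in> borel_measurable M"
  using measurable_from_subalg subalgebra_\<F> by blast

lemma measurable_\<F>_mono:
  "X \<in> borel_measurable (\<F> s) \<Longrightarrow> s \<le> u \<Longrightarrow> u \<le> T \<Longrightarrow> X \<in> borel_measurable (\<F> u)"
  using measurable_from_subalg subalgebra_\<F>_mono by blast

lemma indep_\<F>_increment:
  assumes r: "0 \<le> r" "r < v" "v \<le> T" and j: "j < N"
  shows "indep_set (sets (\<F> r))
    (sigma_sets (space M) {(\<lambda>\<omega>. B j v \<omega> - B j r \<omega>) -` A \<inter> space M | A. A \<in> sets borel})"
proof -
  define G where "G = sigma_sets (space M) (nat_gen M N B r)"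
  define C where "C = {(\<lambda>\<omega>. B j v \<omega> - B j r \<omega>) -` A \<inter> space M | A. A \<in> sets borel}"
  have G_events: "G \<subseteq> events" unfolding G_def using nat_gen_subset_events r
    by (intro sets.sigma_sets_subset) auto
  have C_events: "C \<subseteq> events" unfolding C_def using measurable_B j r by auto
  have ind: "indep_sets
          (\<lambda>k. case k of None \<Rightarrow> G | Some j \<Rightarrow> {(\<lambda>\<omega>. B j v \<omega> - B j r \<omega>) -` A \<inter> space M | A. A \<in> sets borel})
          (insert None (Some ` {..<N}))"
    using brownian r unfolding indep_std_BMs_def G_def by blast
  have "indep_set G C"
  proof (rule indep_setI)
    fix a c assume "a \<in> G" "c \<in> C"
    have "prob (\<Inter>k\<in>{None, Some j}. case_option a (\<lambda>_. c) k) =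
          (\<Prod>k\<in>{None, Some j}. prob (case_option a (\<lambda>_. c) k))"
      by (rule indep_setsD[OF ind]) (use j \<open>a \<in> G\<close> \<open>c \<in> C\<close> in \<open>auto simp: C_def split: option.split\<close>)
    then show "prob (a \<inter> c) = prob a * prob c" by simp
  qed (use G_events C_events in auto)
  moreover have "sigma_algebra (space M) G"
    unfolding G_def using nat_gen_subset_events[of r] r sets.sets_into_space
    by (intro sigma_algebra_sigma_sets) auto
  moreover have "Int_stable C"
    unfolding C_def using sets.Int_stable[of "vimage_algebra (space M) (\<lambda>\<omega>. B j v \<omega> - B j r \<omega>) borel"]
    by (simp add: sets_vimage_algebra2)
  ultimately have "indep_set (sigma_sets (space M) (G \<union> null_sets M)) (sigma_sets (space M) C)"
    using indep_set_completion G_events C_events by blast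
  moreover have "sigma_sets (space M) (G \<union> null_sets M) = sets (\<F> r)"
    unfolding sets_\<F>[OF order.trans[OF less_imp_le[OF r(2)] r(3)]] G_def
  proof (rule sigma_sets_eqI)
    fix b assume "b \<in> sigma_sets (space M) (nat_gen M N B r) \<union> null_sets M"
    then show "b \<in> sigma_sets (space M) (nat_gen M N B r \<union> null_sets M)"
      using sigma_sets_subseteq[of "nat_gen M N B r" "nat_gen M N B r \<union> null_sets M" "space M"] by auto
  qed auto
  ultimately show ?thesis unfolding C_def by simp
qed

lemma integral_mult_increment:
  assumes r: "0 \<le> r" "r \<le> v" "v \<le> T" and j: "j < N"
    and Y: "Y \<in> borel_measurable (\<F> r)" "integrable M Y"
  shows "integrable M (\<lambda>\<omega>. Y \<omega> * (B j v \<omega> - B j r \<omega>))"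
    and "(\<integral>\<omega>. Y \<omega> * (B j v \<omega> - B j r \<omega>) \<partial>M) = 0"
proof -
  define D where "D \<omega> = B j v \<omega> - B j r \<omega>" for \<omega>
  have "integrable M (\<lambda>\<omega>. Y \<omega> * D \<omega>) \<and> (\<integral>\<omega>. Y \<omega> * D \<omega> \<partial>M) = 0"
  proof (cases "r = v")
    case False
    then have rv: "r < v" using r by simp
    have dist: "distributed M lborel D (normal_density 0 (sqrt (v - r)))"
      using brownian r rv j unfolding indep_std_BMs_def D_def by auto
    have D_int: "integrable M D"
      by (rule distributed_integrable_var[OF dist]) (use rv in \<open>auto intro: integrable_normal_moment_nz_1\<close>)
    have D_mean: "(\<integral>\<omega>. D \<omega> \<partial>M) = 0"
      using normal_distributed_expectation[OF _ dist] rv by simp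
    have "indep_var borel Y borel D"
      unfolding indep_var_eq
    proof (intro conjI)
      show "random_variable borel Y" using measurable_\<F>_imp_M[OF Y(1)] r by simp
      show "random_variable borel D" unfolding D_def using measurable_B j r by auto
      have "sigma_sets (space M) {Y -` A \<inter> space M |A. A \<in> sets borel} \<subseteq> sets (\<F> r)"
        using Y(1) by (intro sets.sigma_sets_subset[of _ "\<F> r", simplified]) (auto dest: measurable_sets)
      then show "indep_set (sigma_sets (space M) {Y -` A \<inter> space M |A. A \<in> sets borel})
          (sigma_sets (space M) {D -` A \<inter> space M |A. A \<in> sets borel})"
        using indep_\<F>_increment[OF r(1) rv r(3) j] unfolding indep_set_def D_def
        by (rule_tac indep_sets_mono_sets) (auto split: bool.split)
    qed
    then show ?thesis using indep_var_integrable[OF _ Y(2) D_int] indep_var_lebesgue_integral[OF _ Y(2) D_int] D_mean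
      by simp
  qed (simp add: D_def)
  then show "integrable M (\<lambda>\<omega>. Y \<omega> * (B j v \<omega> - B j r \<omega>))"
    and "(\<integral>\<omega>. Y \<omega> * (B j v \<omega> - B j r \<omega>) \<partial>M) = 0" unfolding D_def by auto
qed

lemma simple_ok_times:
  assumes ok: "simple_ok \<F> T n p c" and k: "k < n"
  shows "0 \<le> p k" and "p k < p (Suc k)" and "p (Suc k) \<le> T"
proof -
  have mono: "p a \<le> p b" if "a \<le> b" "b \<le> n" for a b
    using that
  proof (induction b)
    case (Suc b)
    show ?case
    proof (cases "a = Suc b")
      case False
      then have "p a \<le> p b" using Suc by simp
      also have "p b < p (Suc b)" using ok Suc.prems unfolding simple_ok_def by auto
      finally show ?thesis by simp
    qed simp
  qed simp
  show "0 \<le> p k" using mono[of 0 k] ok k unfolding simple_ok_def by auto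
  show "p k < p (Suc k)" using ok k unfolding simple_ok_def by auto
  show "p (Suc k) \<le> T" using mono[of "Suc k" n] ok k unfolding simple_ok_def by auto
qed

lemma simple_coefficient:
  assumes ok: "simple_ok \<F> T n p c" and k: "k < n" and u: "p k \<le> u" "u \<le> T"
  shows "c k \<in> borel_measurable (\<F> u)" and "integrable M (c k)"
proof -
  have c: "c k \<in> borel_measurable (\<F> (p k))" "\<exists>C. \<forall>\<omega>\<in>space M. \<bar>c k \<omega>\<bar> \<le> C"
    using ok k unfolding simple_ok_def by auto
  show m: "c k \<in> borel_measurable (\<F> u)" using measurable_\<F>_mono[OF c(1) u] .
  obtain C where "\<forall>\<omega>\<in>space M. \<bar>c k \<omega>\<bar> \<le> C" using c(2) by blast
  then show "integrable M (c k)"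
    using measurable_\<F>_imp_M[OF m u(2)] by (intro integrable_const_bound[where B=C] AE_I2) auto
qed

lemma integrable_simple_int:
  assumes ok: "simple_ok \<F> T n p c" and j: "j < N" and t: "0 \<le> t" "t \<le> T"
  shows "integrable M (simple_int (B j) n p c t)"
proof -
  have "integrable M (\<lambda>\<omega>. c k \<omega> * (B j (min (p (Suc k)) t) \<omega> - B j (min (p k) t) \<omega>))"
    if k: "k < n" for k
  proof (cases "p k \<le> t")
    case True
    note pk = simple_ok_times[OF ok k]
    show ?thesis
      using simple_coefficient[OF ok k order.refl] pk True t
      by (intro integral_mult_increment(1)[OF _ _ _ j]) auto
  next
    case False
    then show ?thesis using simple_ok_times(2)[OF ok k] by (simp add: min_absorb2)
  qed
  then show ?thesis unfolding simple_int_def by auto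
qed

lemma integral_indicator_simple_int_increment:
  assumes ok: "simple_ok \<F> T n p c" and j: "j < N" and st: "0 \<le> s" "s \<le> t" "t \<le> T"
    and A: "A \<in> sets (\<F> s)"
  shows "(\<integral>\<omega>. indicator A \<omega> * (simple_int (B j) n p c t \<omega> - simple_int (B j) n p c s \<omega>) \<partial>M) = 0"
proof -
  define u1 where "u1 k = max s (min (p k) t)" for k
  define u2 where "u2 k = max s (min (p (Suc k)) t)" for k
  define tm where "tm k \<omega> = (indicator A \<omega> * c k \<omega>) * (B j (u2 k) \<omega> - B j (u1 k) \<omega>)" for k \<omega>
  have eq: "indicator A \<omega> * (simple_int (B j) n p c t \<omega> - simple_int (B j) n p c s \<omega>) = (\<Sum>k<n. tm k \<omega>)" for \<omega>
  proof -
    have "indicator A \<omega> * (simple_int (B j) n p c t \<omega> - simple_int (B j) n p c s \<omega>)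
      = (\<Sum>k<n. indicator A \<omega> * c k \<omega> * ((B j (min (p (Suc k)) t) \<omega> - B j (min (p k) t) \<omega>)
             - (B j (min (p (Suc k)) s) \<omega> - B j (min (p k) s) \<omega>)))"
      unfolding simple_int_def by (simp add: sum_distrib_left sum_subtractf[symmetric] algebra_simps)
    also have "\<dots> = (\<Sum>k<n. tm k \<omega>)"
      unfolding tm_def u1_def u2_def using simple_ok_times(2)[OF ok] st
      by (intro sum.cong refl) (simp add: increment_min_max[of _ _ s t "\<lambda>u. B j u \<omega>"])
    finally show ?thesis .
  qed
  have tm: "integrable M (tm k) \<and> integral\<^sup>L M (tm k) = 0" if k: "k < n" for k
  proof (cases "u1 k = u2 k")
    case True then show ?thesis unfolding tm_def by simp
  next
    case False
    note pk = simple_ok_times[OF ok k]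
    have le: "u1 k \<le> u2 k" "u2 k \<le> T" unfolding u1_def u2_def using pk st by (auto simp: max_def min_def)
    have "p k \<le> t"
    proof (rule ccontr)
      assume "\<not> p k \<le> t"
      then have "min (p k) t = t" "min (p (Suc k)) t = t" using pk by auto
      then show False using False unfolding u1_def u2_def by simp
    qed
    then have u1: "u1 k = max s (p k)" unfolding u1_def by simp
    have AF: "A \<in> sets (\<F> (u1 k))" using sets_\<F>_mono[of s "u1 k"] A le u1 by auto
    then have AM: "A \<in> events" using sets_\<F>_subset[of "u1 k"] le by auto
    have "c k \<in> borel_measurable (\<F> (u1 k))" using simple_coefficient(1)[OF ok k, of "u1 k"] u1 le by simp
    then have "(\<lambda>\<omega>. indicator A \<omega> * c k \<omega>) \<in> borel_measurable (\<F> (u1 k))" using AF by measurable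
    moreover have "integrable M (\<lambda>\<omega>. indicator A \<omega> * c k \<omega>)"
      using integrable_mult_indicator[OF AM simple_coefficient(2)[OF ok k order.refl]] pk by simp
    ultimately show ?thesis unfolding tm_def using u1 st
      by (intro conjI integral_mult_increment[OF _ le(1,2) j]) auto
  qed
  have "(\<integral>\<omega>. (\<Sum>k<n. tm k \<omega>) \<partial>M) = (\<Sum>k<n. \<integral>\<omega>. tm k \<omega> \<partial>M)"
    using tm by (intro Bochner_Integration.integral_sum) auto
  then show ?thesis unfolding eq using tm by simp
qed

lemma ito_integral_L1_approximation:
  assumes ito: "is_ito_integral M \<F> T (B j) Z I" and j: "j < N"
  obtains n p c where "\<And>k. simple_ok \<F> T (n k) (p k) (c k)"
    and "\<And>t. 0 \<le> t \<Longrightarrow> t \<le> T \<Longrightarrow>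
      \<forall>\<^sub>F k in sequentially. integrable M (\<lambda>\<omega>. simple_int (B j) (n k) (p k) (c k) t \<omega> - I t \<omega>)"
    and "\<And>t. 0 \<le> t \<Longrightarrow> t \<le> T \<Longrightarrow>
      (\<lambda>k. \<integral>\<omega>. \<bar>simple_int (B j) (n k) (p k) (c k) t \<omega> - I t \<omega>\<bar> \<partial>M) \<longlonglongrightarrow> 0"
proof -
  obtain n p c where ok: "\<And>k. simple_ok \<F> T (n k) (p k) (c k)"
    and conv: "\<And>t. t \<in> {0..T} \<Longrightarrow>
      (\<lambda>k. \<integral>\<^sup>+\<omega>. ennreal ((simple_int (B j) (n k) (p k) (c k) t \<omega> - I t \<omega>)\<^sup>2) \<partial>M) \<longlonglongrightarrow> 0"
    using ito unfolding is_ito_integral_def by blast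
  define g where "g k t \<omega> = simple_int (B j) (n k) (p k) (c k) t \<omega> - I t \<omega>" for k t \<omega>
  define e where "e k t = sqrt (enn2real (\<integral>\<^sup>+\<omega>. ennreal ((g k t \<omega>)\<^sup>2) \<partial>M))" for k t
  have close: "\<forall>\<^sub>F k in sequentially. integrable M (g k t) \<and> (\<integral>\<omega>. \<bar>g k t \<omega>\<bar> \<partial>M) \<le> e k t"
    if t: "0 \<le> t" "t \<le> T" for t
  proof -
    have "I t \<in> borel_measurable (\<F> t)" using ito t unfolding is_ito_integral_def adapted_def by auto
    then have "I t \<in> borel_measurable M" using measurable_\<F>_imp_M t(2) by blast
    then have meas: "g k t \<in> borel_measurable M" for k
      using borel_measurable_integrable[OF integrable_simple_int[OF ok j t]] unfolding g_def by simp
    have "\<forall>\<^sub>F k in sequentially. (\<integral>\<^sup>+\<omega>. ennreal ((g k t \<omega>)\<^sup>2) \<partial>M) < 1"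
      using conv[of t] t unfolding g_def by (intro order_tendstoD(2)) auto
    then show ?thesis
    proof eventually_elim
      case (elim k)
      have "(\<integral>\<^sup>+\<omega>. ennreal ((g k t \<omega>)\<^sup>2) \<partial>M) < \<infinity>"
        using elim ennreal_one_less_top unfolding infinity_ennreal_def by (rule order.strict_trans)
      then show ?case using integral_abs_le_sqrt_nn_integral_square[OF meas] unfolding e_def by simp
    qed
  qed
  have L1: "(\<lambda>k. \<integral>\<omega>. \<bar>g k t \<omega>\<bar> \<partial>M) \<longlonglongrightarrow> 0" if t: "0 \<le> t" "t \<le> T" for t
  proof (rule tendsto_sandwich[of "\<lambda>_. 0" _ _ "\<lambda>k. e k t"])
    show "\<forall>\<^sub>F k in sequentially. 0 \<le> (\<integral>\<omega>. \<bar>g k t \<omega>\<bar> \<partial>M)"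
      by (intro always_eventually allI Bochner_Integration.integral_nonneg) simp
    have "(\<lambda>k. enn2real (\<integral>\<^sup>+\<omega>. ennreal ((g k t \<omega>)\<^sup>2) \<partial>M)) \<longlonglongrightarrow> enn2real 0"
      using conv[of t] t unfolding g_def by (intro tendsto_enn2real) auto
    from tendsto_real_sqrt[OF this] show "(\<lambda>k. e k t) \<longlonglongrightarrow> 0" unfolding e_def by simp
    show "\<forall>\<^sub>F k in sequentially. (\<integral>\<omega>. \<bar>g k t \<omega>\<bar> \<partial>M) \<le> e k t"
      using close[OF t] by eventually_elim simp
  qed simp
  show ?thesis
  proof (rule that[OF ok])
    fix t assume t: "0 \<le> t" "t \<le> T"
    show "\<forall>\<^sub>F k in sequentially. integrable M (\<lambda>\<omega>. simple_int (B j) (n k) (p k) (c k) t \<omega> - I t \<omega>)"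
      using close[OF t] unfolding g_def[abs_def] by eventually_elim simp
    show "(\<lambda>k. \<integral>\<omega>. \<bar>simple_int (B j) (n k) (p k) (c k) t \<omega> - I t \<omega>\<bar> \<partial>M) \<longlonglongrightarrow> 0"
      using L1[OF t] unfolding g_def .
  qed
qed

text \<open>The increments of the approximating simple integrals are orthogonal to \<open>\<F> s\<close>, and
  orthogonality passes to the \<open>L\<^sup>1\<close>-limit.\<close>

lemma ito_integral_martingale:
  assumes ito: "is_ito_integral M \<F> T (B j) Z I" and j: "j < N"
  shows "\<And>t. 0 \<le> t \<Longrightarrow> t \<le> T \<Longrightarrow> integrable M (I t)"
    and "\<And>s t A. 0 \<le> s \<Longrightarrow> s \<le> t \<Longrightarrow> t \<le> T \<Longrightarrow> A \<in> sets (\<F> s) \<Longrightarrow>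
          (\<integral>\<omega>. indicator A \<omega> * (I t \<omega> - I s \<omega>) \<partial>M) = 0"
proof -
  obtain n p c where ok: "\<And>k. simple_ok \<F> T (n k) (p k) (c k)"
    and close: "\<And>t. 0 \<le> t \<Longrightarrow> t \<le> T \<Longrightarrow>
      \<forall>\<^sub>F k in sequentially. integrable M (\<lambda>\<omega>. simple_int (B j) (n k) (p k) (c k) t \<omega> - I t \<omega>)"
    and L1: "\<And>t. 0 \<le> t \<Longrightarrow> t \<le> T \<Longrightarrow>
      (\<lambda>k. \<integral>\<omega>. \<bar>simple_int (B j) (n k) (p k) (c k) t \<omega> - I t \<omega>\<bar> \<partial>M) \<longlonglongrightarrow> 0"
    using ito_integral_L1_approximation[OF ito j] by blast
  define J where "J k = simple_int (B j) (n k) (p k) (c k)" for k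
  have J_int: "integrable M (J k t)" if "0 \<le> t" "t \<le> T" for k t
    unfolding J_def using integrable_simple_int[OF ok j that] .
  show "integrable M (I t)" if t: "0 \<le> t" "t \<le> T" for t
  proof -
    obtain k where "integrable M (\<lambda>\<omega>. J k t \<omega> - I t \<omega>)"
      using eventually_happens[OF close[OF t]] unfolding J_def by auto
    from Bochner_Integration.integrable_diff[OF J_int[OF t, of k] this] show ?thesis by simp
  qed
  show "(\<integral>\<omega>. indicator A \<omega> * (I t \<omega> - I s \<omega>) \<partial>M) = 0"
    if st: "0 \<le> s" "s \<le> t" "t \<le> T" and A: "A \<in> sets (\<F> s)" for s t A
  proof -
    have t: "0 \<le> t" "t \<le> T" and s: "0 \<le> s" "s \<le> T" using st by auto
    have AM: "A \<in> events" using A sets_\<F>_subset s by auto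
    define a where "a = (\<integral>\<omega>. indicator A \<omega> * (I t \<omega> - I s \<omega>) \<partial>M)"
    have "\<forall>\<^sub>F k in sequentially. \<bar>a\<bar> \<le> (\<integral>\<omega>. \<bar>J k t \<omega> - I t \<omega>\<bar> \<partial>M) + (\<integral>\<omega>. \<bar>J k s \<omega> - I s \<omega>\<bar> \<partial>M)"
      using close[OF t] close[OF s] unfolding J_def[symmetric]
    proof eventually_elim
      case (elim k)
      define gt where "gt \<omega> = J k t \<omega> - I t \<omega>" for \<omega>
      define gs where "gs \<omega> = J k s \<omega> - I s \<omega>" for \<omega>
      have gt: "integrable M gt" and gs: "integrable M gs" using elim unfolding gt_def gs_def by auto
      have "integrable M (\<lambda>\<omega>. indicator A \<omega> * (J k t \<omega> - J k s \<omega>))"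
        using integrable_mult_indicator[OF AM Bochner_Integration.integrable_diff[OF J_int[OF t] J_int[OF s]]]
        by simp
      moreover have "(\<integral>\<omega>. indicator A \<omega> * (J k t \<omega> - J k s \<omega>) \<partial>M) = 0"
        using integral_indicator_simple_int_increment[OF ok j st A] unfolding J_def .
      moreover have "a = (\<integral>\<omega>. indicator A \<omega> * (J k t \<omega> - J k s \<omega>) - indicator A \<omega> * gt \<omega>
          + indicator A \<omega> * gs \<omega> \<partial>M)"
        unfolding a_def gt_def gs_def by (rule Bochner_Integration.integral_cong) (auto simp: algebra_simps)
      ultimately have "a = - (\<integral>\<omega>. indicator A \<omega> * gt \<omega> \<partial>M) + (\<integral>\<omega>. indicator A \<omega> * gs \<omega> \<partial>M)"
        using integrable_mult_indicator[OF AM gt] integrable_mult_indicator[OF AM gs] by simp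
      then show ?case
        using abs_integral_indicator_le[OF AM gt] abs_integral_indicator_le[OF AM gs]
        unfolding gt_def gs_def by linarith
    qed
    moreover have "(\<lambda>k. (\<integral>\<omega>. \<bar>J k t \<omega> - I t \<omega>\<bar> \<partial>M) + (\<integral>\<omega>. \<bar>J k s \<omega> - I s \<omega>\<bar> \<partial>M)) \<longlonglongrightarrow> 0"
      using tendsto_add[OF L1[OF t] L1[OF s]] unfolding J_def by simp
    ultimately have "\<bar>a\<bar> \<le> 0" by (intro tendsto_le[OF _ _ tendsto_const]) auto
    then show ?thesis unfolding a_def by simp
  qed
qed

lemma cond_exp_sum_ito_increments:
  assumes ito: "\<And>j. j < N \<Longrightarrow> is_ito_integral M \<F> T (B j) (Z j) (I j)"
    and st: "0 \<le> s" "s \<le> r" "r \<le> T"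
  shows "AE \<omega> in M. real_cond_exp M (\<F> s) (\<lambda>\<omega>. \<Sum>j<N. I j r \<omega> - I j s \<omega>) \<omega> = 0"
proof -
  interpret S: sigma_finite_subalgebra M "\<F> s" using sigma_finite_subalgebra_\<F> st by simp
  have int: "integrable M (\<lambda>\<omega>. I j r \<omega> - I j s \<omega>)" if "j < N" for j
    using ito_integral_martingale(1)[OF ito[OF that] that] st by auto
  show ?thesis
  proof (rule S.real_cond_exp_charact)
    fix A assume A: "A \<in> sets (\<F> s)"
    then have AM: "A \<in> events" using sets_\<F>_subset[of s] st by auto
    have "(\<integral>\<omega>\<in>A. (\<Sum>j<N. I j r \<omega> - I j s \<omega>) \<partial>M)
        = (\<integral>\<omega>. (\<Sum>j<N. indicator A \<omega> * (I j r \<omega> - I j s \<omega>)) \<partial>M)"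
      unfolding set_lebesgue_integral_def by (simp add: sum_distrib_left)
    also have "\<dots> = (\<Sum>j<N. \<integral>\<omega>. indicator A \<omega> * (I j r \<omega> - I j s \<omega>) \<partial>M)"
      using integrable_mult_indicator[OF AM int] by (intro Bochner_Integration.integral_sum) simp
    also have "\<dots> = 0"
      using ito_integral_martingale(2)[OF ito _ st A] by simp
    finally show "(\<integral>\<omega>\<in>A. (\<Sum>j<N. I j r \<omega> - I j s \<omega>) \<partial>M) = (\<integral>\<omega>\<in>A. 0 \<partial>M)" by simp
  qed (use int in auto)
qed

end

section \<open>The flat solution\<close>

locale bsde_driver = brownian_filtration +
  fixes f :: "nat \<Rightarrow> real \<Rightarrow> 'a \<Rightarrow> real"
  assumes progressive_f: "\<forall>i<N. progressive (aug_filt M N B) T (f i)"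
    and square_integrable_f: "\<forall>i<N. (\<integral>\<^sup>+\<omega>. (\<integral>\<^sup>+u\<in>{0..T}. ennreal ((f i u \<omega>)\<^sup>2) \<partial>lborel) \<partial>M) < \<infinity>"
begin

lemma measurable_f:
  assumes i: "i < N" and ab: "0 \<le> a" "b \<le> T"
  shows "(\<lambda>(\<omega>, u). indicator {a..b} u * f i u \<omega>) \<in> borel_measurable (M \<Otimes>\<^sub>M lborel)"
proof -
  define cl where "cl u = max 0 (min u T)" for u :: real
  have prog: "(\<lambda>(u, \<omega>). f i u \<omega>) \<in> borel_measurable (restrict_space borel {0..T} \<Otimes>\<^sub>M \<F> T)"
    using progressive_f i T_pos unfolding progressive_def by auto
  have "(\<lambda>x. (cl (fst x), snd x)) \<in> measurable (borel \<Otimes>\<^sub>M M) (restrict_space borel {0..T} \<Otimes>\<^sub>M \<F> T)"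
  proof (rule measurable_Pair)
    have "(\<lambda>x. cl (fst x)) \<in> measurable (borel \<Otimes>\<^sub>M M) borel" unfolding cl_def by measurable
    then show "(\<lambda>x. cl (fst x)) \<in> measurable (borel \<Otimes>\<^sub>M M) (restrict_space borel {0..T})"
      by (intro measurable_restrict_space2) (auto simp: cl_def T_pos less_imp_le)
    have "(\<lambda>x. x) \<in> measurable M (\<F> T)"
      using measurable_from_subalg[OF subalgebra_\<F>[of T] measurable_ident_sets[OF refl]] by simp
    then show "snd \<in> measurable (borel \<Otimes>\<^sub>M M) (\<F> T)"
      using measurable_comp[OF measurable_snd] by (simp add: comp_def)
  qed
  from measurable_comp[OF this prog]
  have "(\<lambda>(u, \<omega>). indicator {a..b} u * f i (cl u) \<omega>) \<in> borel_measurable (borel \<Otimes>\<^sub>M M)"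
    by (simp add: comp_def case_prod_beta) measurable
  moreover have "(\<lambda>(u, \<omega>). indicator {a..b} u * f i (cl u) \<omega>) = (\<lambda>(u, \<omega>). indicator {a..b} u * f i u \<omega>)"
    using ab by (auto simp: cl_def indicator_def fun_eq_iff)
  ultimately have "(\<lambda>(u, \<omega>). indicator {a..b} u * f i u \<omega>) \<in> borel_measurable (lborel \<Otimes>\<^sub>M M)"
    by (simp cong: measurable_cong_sets)
  then show ?thesis by (subst measurable_pair_swap_iff) simp
qed

lemma nn_integral_square_f:
  "(\<integral>\<^sup>+u. ennreal ((indicator {0..T} u * f i u \<omega>)\<^sup>2) \<partial>lborel)
    = (\<integral>\<^sup>+u\<in>{0..T}. ennreal ((f i u \<omega>)\<^sup>2) \<partial>lborel)"
  by (rule nn_integral_cong) (auto simp: indicator_def)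

lemma measurable_nn_integral_square_f:
  assumes "i < N"
  shows "(\<lambda>\<omega>. \<integral>\<^sup>+u\<in>{0..T}. ennreal ((f i u \<omega>)\<^sup>2) \<partial>lborel) \<in> borel_measurable M"
  unfolding nn_integral_square_f[symmetric] using measurable_f[OF assms order.refl order.refl]
  by (intro lborel.borel_measurable_nn_integral) (simp add: case_prod_beta, measurable)

lemma nn_integral_abs_f_le:
  assumes i: "i < N" and st: "0 \<le> s" "t \<le> T" and \<omega>: "\<omega> \<in> space M"
  shows "(\<integral>\<^sup>+u. ennreal \<bar>indicator {s..t} u * f i u \<omega>\<bar> \<partial>lborel)
    \<le> ennreal T + (\<integral>\<^sup>+u\<in>{0..T}. ennreal ((f i u \<omega>)\<^sup>2) \<partial>lborel)"
proof -
  have m: "(\<lambda>u. indicator {0..T} u * f i u \<omega>) \<in> borel_measurable lborel"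
    using measurable_Pair2[OF measurable_f[OF i order.refl order.refl] \<omega>] by simp
  have "(\<integral>\<^sup>+u. ennreal \<bar>indicator {s..t} u * f i u \<omega>\<bar> \<partial>lborel)
      \<le> (\<integral>\<^sup>+u. ennreal (indicator {0..T} u) + ennreal ((indicator {0..T} u * f i u \<omega>)\<^sup>2) \<partial>lborel)"
  proof (rule nn_integral_mono)
    fix u
    have "ennreal \<bar>f i u \<omega>\<bar> \<le> 1 + ennreal ((f i u \<omega>)\<^sup>2)"
      using abs_le_one_plus_square ennreal_leI by (fastforce simp: ennreal_plus[symmetric])
    then show "ennreal \<bar>indicator {s..t} u * f i u \<omega>\<bar>
        \<le> ennreal (indicator {0..T} u) + ennreal ((indicator {0..T} u * f i u \<omega>)\<^sup>2)"
      using st by (auto simp: indicator_def)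
  qed
  also have "\<dots> = ennreal T + (\<integral>\<^sup>+u\<in>{0..T}. ennreal ((f i u \<omega>)\<^sup>2) \<partial>lborel)"
    using m T_pos by (subst nn_integral_add) (auto simp: ennreal_indicator nn_integral_square_f)
  finally show ?thesis .
qed

lemma AE_set_integrable_f:
  assumes i: "i < N"
  shows "AE \<omega> in M. set_integrable lborel {0..T} (\<lambda>u. f i u \<omega>)"
proof -
  have "AE \<omega> in M. (\<integral>\<^sup>+u\<in>{0..T}. ennreal ((f i u \<omega>)\<^sup>2) \<partial>lborel) \<noteq> \<infinity>"
    using square_integrable_f i measurable_nn_integral_square_f[OF i] by (intro nn_integral_PInf_AE) auto
  then show ?thesis
  proof (rule AE_mp, intro AE_I2 impI)
    fix \<omega> assume \<omega>: "\<omega> \<in> space M" and fin: "(\<integral>\<^sup>+u\<in>{0..T}. ennreal ((f i u \<omega>)\<^sup>2) \<partial>lborel) \<noteq> \<infinity>"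
    have "(\<integral>\<^sup>+u. ennreal (norm (indicator {0..T} u * f i u \<omega>)) \<partial>lborel) < \<infinity>"
      using nn_integral_abs_f_le[OF i order.refl order.refl \<omega>] fin
      by (simp add: ennreal_add_less_top less_top order.strict_trans1)
    moreover have "(\<lambda>u. indicator {0..T} u * f i u \<omega>) \<in> borel_measurable lborel"
      using measurable_Pair2[OF measurable_f[OF i order.refl order.refl] \<omega>] by simp
    ultimately show "set_integrable lborel {0..T} (\<lambda>u. f i u \<omega>)"
      unfolding set_integrable_def by (intro integrableI_bounded) auto
  qed
qed

lemma abs_set_integral_f_le:
  assumes i: "i < N" and st: "0 \<le> s" "t \<le> T" and \<omega>: "\<omega> \<in> space M"
  shows "ennreal \<bar>LINT u:{s..t}|lborel. f i u \<omega>\<bar>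
    \<le> ennreal T + (\<integral>\<^sup>+u\<in>{0..T}. ennreal ((f i u \<omega>)\<^sup>2) \<partial>lborel)"
proof (cases "integrable lborel (\<lambda>u. indicator {s..t} u * f i u \<omega>)")
  case True
  then have "ennreal \<bar>LINT u:{s..t}|lborel. f i u \<omega>\<bar>
      \<le> (\<integral>\<^sup>+u. ennreal \<bar>indicator {s..t} u * f i u \<omega>\<bar> \<partial>lborel)"
    unfolding set_lebesgue_integral_def using integral_norm_bound_ennreal[OF True] by simp
  then show ?thesis using nn_integral_abs_f_le[OF i st \<omega>] by (rule order.trans)
next
  case False
  then show ?thesis unfolding set_lebesgue_integral_def by (simp add: not_integrable_integral_eq)
qed

lemma integrable_set_integral_f:
  assumes i: "i < N" and st: "0 \<le> s" "t \<le> T"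
  shows "integrable M (\<lambda>\<omega>. LINT u:{s..t}|lborel. f i u \<omega>)"
proof (rule integrableI_bounded)
  show m: "(\<lambda>\<omega>. LINT u:{s..t}|lborel. f i u \<omega>) \<in> borel_measurable M"
    unfolding set_lebesgue_integral_def using measurable_f[OF i st]
    by (intro lborel.borel_measurable_lebesgue_integral) (simp add: case_prod_beta)
  have "(\<integral>\<^sup>+\<omega>. ennreal (norm (LINT u:{s..t}|lborel. f i u \<omega>)) \<partial>M)
      \<le> (\<integral>\<^sup>+\<omega>. ennreal T + (\<integral>\<^sup>+u\<in>{0..T}. ennreal ((f i u \<omega>)\<^sup>2) \<partial>lborel) \<partial>M)"
    using abs_set_integral_f_le[OF i st] by (intro nn_integral_mono) auto
  also have "\<dots> = ennreal T + (\<integral>\<^sup>+\<omega>. (\<integral>\<^sup>+u\<in>{0..T}. ennreal ((f i u \<omega>)\<^sup>2) \<partial>lborel) \<partial>M)"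
    using measurable_nn_integral_square_f[OF i] by (subst nn_integral_add) (auto simp: emeasure_space_1)
  also have "\<dots> < \<infinity>" using square_integrable_f i by (simp add: ennreal_add_less_top)
  finally show "(\<integral>\<^sup>+\<omega>. ennreal (norm (LINT u:{s..t}|lborel. f i u \<omega>)) \<partial>M) < \<infinity>" .
qed

end

locale flat_bsde_solution = bsde_driver +
  fixes h :: "real \<Rightarrow> real" and \<theta> :: "nat \<Rightarrow> 'a \<Rightarrow> real" and Y :: "nat \<Rightarrow> real \<Rightarrow> 'a \<Rightarrow> real"
    and Z :: "nat \<Rightarrow> nat \<Rightarrow> real \<Rightarrow> 'a \<Rightarrow> real" and K :: "real \<Rightarrow> 'a \<Rightarrow> real" and t m Mh :: real
  assumes N_pos: "N \<ge> 1" and h_mono: "mono h" and m_pos: "0 < m"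
    and h_expansive: "\<forall>x y. m * \<bar>x - y\<bar> \<le> \<bar>h x - h y\<bar>"
    and h_lipschitz: "\<forall>x y. \<bar>h x - h y\<bar> \<le> Mh * \<bar>x - y\<bar>"
    and solution: "flat_solution M (aug_filt M N B) N T B h \<theta> f Y Z K"
    and t: "0 \<le> t" "t \<le> T"
begin

definition X :: "nat \<Rightarrow> real \<Rightarrow> 'a \<Rightarrow> real" where
  "X i s = real_cond_exp M (\<F> s) (\<lambda>\<omega>. Y i t \<omega> + (LINT u:{s..t}|lborel. f i u \<omega>))"

definition R :: "real \<Rightarrow> 'a \<Rightarrow> real" where
  "R s = real_cond_exp M (\<F> s) (\<lambda>\<omega>. K t \<omega> - K s \<omega>)"

definition \<phi> :: "real \<Rightarrow> 'a \<Rightarrow> real" where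
  "\<phi> s \<omega> = min_shift N h (\<lambda>i. X i s \<omega>)"

definition hsum :: "real \<Rightarrow> 'a \<Rightarrow> real" where
  "hsum u \<omega> = (\<Sum>i<N. h (Y i u \<omega>))"

lemma Y_adapted: "i < N \<Longrightarrow> 0 \<le> u \<Longrightarrow> u \<le> T \<Longrightarrow> Y i u \<in> borel_measurable (\<F> u)"
  using solution unfolding flat_solution_def adapted_def by auto

lemma Y_integrable: "i < N \<Longrightarrow> 0 \<le> u \<Longrightarrow> u \<le> T \<Longrightarrow> integrable M (Y i u)"
  using solution Y_adapted measurable_\<F>_imp_M unfolding flat_solution_def
  by (intro integrable_of_nn_integral_SUP_square[where U="{0..T}"]) auto

lemma K_adapted: "0 \<le> u \<Longrightarrow> u \<le> T \<Longrightarrow> K u \<in> borel_measurable (\<F> u)"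
  using solution unfolding flat_solution_def adapted_def by auto

lemma K_integrable: "0 \<le> u \<Longrightarrow> u \<le> T \<Longrightarrow> integrable M (K u)"
  using solution K_adapted measurable_\<F>_imp_M unfolding flat_solution_def
  by (intro integrable_of_nn_integral_SUP_square[where U="{0..T}"]) auto

lemma K_path: "\<omega> \<in> space M \<Longrightarrow> continuous_on {0..T} (\<lambda>u. K u \<omega>) \<and> mono_on {0..T} (\<lambda>u. K u \<omega>)"
  using solution unfolding flat_solution_def by auto

lemma K_mono: "\<omega> \<in> space M \<Longrightarrow> 0 \<le> a \<Longrightarrow> a \<le> b \<Longrightarrow> b \<le> T \<Longrightarrow> K a \<omega> \<le> K b \<omega>"
  using solution unfolding flat_solution_def mono_on_def by auto

lemma integrable_K_increment: "0 \<le> s \<Longrightarrow> s \<le> t \<Longrightarrow> integrable M (\<lambda>\<omega>. K t \<omega> - K s \<omega>)"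
  using K_integrable t by auto

lemma hsum_nonneg: "AE \<omega> in M. \<forall>u\<in>{0..T}. 0 \<le> hsum u \<omega>"
  using solution N_pos unfolding flat_solution_def hsum_def
  by (auto elim!: AE_mp intro!: AE_I2 simp: zero_le_divide_iff)

lemma R_adapted: "R s \<in> borel_measurable (\<F> s)"
  unfolding R_def by simp

lemma R_integrable: "0 \<le> s \<Longrightarrow> s \<le> t \<Longrightarrow> integrable M (R s)"
  unfolding R_def using t integrable_K_increment
  by (intro sigma_finite_subalgebra.real_cond_exp_int(1)[OF sigma_finite_subalgebra_\<F>]) auto

lemma R_nonneg:
  assumes "0 \<le> s" "s \<le> t"
  shows "AE \<omega> in M. 0 \<le> R s \<omega>"
  unfolding R_def using assms t integrable_K_increment[OF assms] K_mono
  by (intro sigma_finite_subalgebra.real_cond_exp_pos[OF sigma_finite_subalgebra_\<F>])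
    (auto simp: borel_measurable_integrable)

lemma R_final: "AE \<omega> in M. R t \<omega> = 0"
proof -
  interpret S: sigma_finite_subalgebra M "\<F> t" using sigma_finite_subalgebra_\<F> t by simp
  have "AE \<omega> in M. real_cond_exp M (\<F> t) (\<lambda>\<omega>. 0) \<omega> = 0" by (rule S.real_cond_exp_F_meas) auto
  then show ?thesis unfolding R_def by simp
qed

lemma integral_indicator_R:
  assumes "0 \<le> s" "s \<le> t" and "A \<in> sets (\<F> s)"
  shows "(\<integral>\<omega>. indicator A \<omega> * R s \<omega> \<partial>M) = (\<integral>\<omega>. indicator A \<omega> * (K t \<omega> - K s \<omega>) \<partial>M)"
  unfolding R_def using assms t integrable_K_increment[OF assms(1,2)]
  by (intro sigma_finite_subalgebra.integral_indicator_real_cond_exp[OF sigma_finite_subalgebra_\<F>]) auto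

lemma Y_between_times:
  assumes i: "i < N" and s: "0 \<le> s" "s \<le> t"
  obtains I where "\<And>j. j < N \<Longrightarrow> is_ito_integral M \<F> T (B j) (Z i j) (I j)"
    and "AE \<omega> in M. Y i s \<omega> = Y i t \<omega> + (LINT u:{s..t}|lborel. f i u \<omega>) + (K t \<omega> - K s \<omega>)
      - (\<Sum>j<N. I j t \<omega> - I j s \<omega>)"
proof -
  obtain I where ito: "\<And>j. j < N \<Longrightarrow> is_ito_integral M \<F> T (B j) (Z i j) (I j)"
    and eqn: "AE \<omega> in M. \<forall>u\<in>{0..T}.
           Y i u \<omega> = \<theta> i \<omega> + (LINT u:{u..T}|lborel. f i u \<omega>)
                      - (\<Sum>j<N. I j T \<omega> - I j u \<omega>) + K T \<omega> - K u \<omega>"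
    using solution i unfolding flat_solution_def by blast
  have "AE \<omega> in M. Y i s \<omega> = Y i t \<omega> + (LINT u:{s..t}|lborel. f i u \<omega>) + (K t \<omega> - K s \<omega>)
      - (\<Sum>j<N. I j t \<omega> - I j s \<omega>)"
    using eqn AE_set_integrable_f[OF i]
  proof eventually_elim
    case (elim \<omega>)
    then have "Y i s \<omega> - Y i t \<omega> = (LINT u:{s..T}|lborel. f i u \<omega>) - (LINT u:{t..T}|lborel. f i u \<omega>)
        - ((\<Sum>j<N. I j T \<omega> - I j s \<omega>) - (\<Sum>j<N. I j T \<omega> - I j t \<omega>)) + (K t \<omega> - K s \<omega>)"
      using s t by auto
    also have "\<dots> = (LINT u:{s..t}|lborel. f i u \<omega>) - (\<Sum>j<N. I j t \<omega> - I j s \<omega>) + (K t \<omega> - K s \<omega>)"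
      using set_integral_Icc_diff[OF elim(2) s(1) s(2) t(2)] by (simp add: sum_subtractf[symmetric])
    finally show ?case by simp
  qed
  with ito show ?thesis by (rule that)
qed

text \<open>Condition \<open>Y_between_times\<close> on \<open>\<F> s\<close>: the Ito increments vanish.\<close>

lemma Y_eq_X_plus_R:
  assumes i: "i < N" and s: "0 \<le> s" "s \<le> t"
  shows "AE \<omega> in M. Y i s \<omega> = X i s \<omega> + R s \<omega>"
proof -
  have sT: "s \<le> T" using s t by simp
  interpret S: sigma_finite_subalgebra M "\<F> s" using sigma_finite_subalgebra_\<F>[OF sT] .
  obtain I where ito: "\<And>j. j < N \<Longrightarrow> is_ito_integral M \<F> T (B j) (Z i j) (I j)"
    and Y_eq: "AE \<omega> in M. Y i s \<omega> = Y i t \<omega> + (LINT u:{s..t}|lborel. f i u \<omega>) + (K t \<omega> - K s \<omega>)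
      - (\<Sum>j<N. I j t \<omega> - I j s \<omega>)"
    using Y_between_times[OF i s] by blast
  define L where "L \<omega> = Y i t \<omega> + (LINT u:{s..t}|lborel. f i u \<omega>)" for \<omega>
  define J where "J \<omega> = (\<Sum>j<N. I j t \<omega> - I j s \<omega>)" for \<omega>
  have L_int: "integrable M L"
    unfolding L_def using Y_integrable[OF i t] integrable_set_integral_f[OF i s(1) t(2)] by auto
  have J_int: "integrable M J"
    unfolding J_def using ito_integral_martingale(1)[OF ito] s t by auto
  have KK_int: "integrable M (\<lambda>\<omega>. K t \<omega> - K s \<omega>)" using integrable_K_increment[OF s] .
  have "AE \<omega> in M. real_cond_exp M (\<F> s) (Y i s) \<omega>
      = real_cond_exp M (\<F> s) (\<lambda>\<omega>. L \<omega> + (K t \<omega> - K s \<omega>) - J \<omega>) \<omega>"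
    using Y_eq Y_integrable[OF i s(1) sT] L_int KK_int J_int unfolding L_def[symmetric] J_def[symmetric]
    by (intro S.real_cond_exp_cong) (auto simp: borel_measurable_integrable)
  moreover have "AE \<omega> in M. real_cond_exp M (\<F> s) (Y i s) \<omega> = Y i s \<omega>"
    using Y_integrable[OF i s(1) sT] Y_adapted[OF i s(1) sT] by (rule S.real_cond_exp_F_meas)
  moreover have "AE \<omega> in M. real_cond_exp M (\<F> s) (\<lambda>\<omega>. L \<omega> + (K t \<omega> - K s \<omega>) - J \<omega>) \<omega>
      = real_cond_exp M (\<F> s) (\<lambda>\<omega>. L \<omega> + (K t \<omega> - K s \<omega>)) \<omega> - real_cond_exp M (\<F> s) J \<omega>"
    using L_int KK_int J_int by (intro S.real_cond_exp_diff) auto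
  moreover have "AE \<omega> in M. real_cond_exp M (\<F> s) (\<lambda>\<omega>. L \<omega> + (K t \<omega> - K s \<omega>)) \<omega>
      = X i s \<omega> + R s \<omega>"
    unfolding X_def R_def L_def[symmetric] using L_int KK_int by (rule S.real_cond_exp_add)
  moreover have "AE \<omega> in M. real_cond_exp M (\<F> s) J \<omega> = 0"
    unfolding J_def using cond_exp_sum_ito_increments[OF ito s(1,2) t(2)] .
  ultimately show ?thesis by eventually_elim simp
qed

lemma Y_eq_X_plus_R_all:
  assumes "0 \<le> s" "s \<le> t"
  shows "AE \<omega> in M. \<forall>i<N. Y i s \<omega> = X i s \<omega> + R s \<omega>"
proof -
  have "AE \<omega> in M. \<forall>i\<in>{..<N}. Y i s \<omega> = X i s \<omega> + R s \<omega>"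
    using Y_eq_X_plus_R[OF _ assms] by (subst AE_finite_all) auto
  then show ?thesis by auto
qed

lemma supermart_R: "supermart M \<F> t R"
  unfolding supermart_def adapted_def
proof (intro conjI allI impI ballI)
  fix s u assume su: "0 \<le> s" "s \<le> u" "u \<le> t"
  interpret S: sigma_finite_subalgebra M "\<F> s" using sigma_finite_subalgebra_\<F> su t by simp
  have "AE \<omega> in M. real_cond_exp M (\<F> s) (R u) \<omega> = real_cond_exp M (\<F> s) (\<lambda>\<omega>. K t \<omega> - K u \<omega>) \<omega>"
    unfolding R_def using subalgebra_\<F> subalgebra_\<F>_mono su t integrable_K_increment
    by (intro S.real_cond_exp_nested_subalg) auto
  moreover have "AE \<omega> in M. real_cond_exp M (\<F> s) (\<lambda>\<omega>. K t \<omega> - K u \<omega>) \<omega> \<le> R s \<omega>"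
    unfolding R_def using su t integrable_K_increment K_mono
    by (intro S.real_cond_exp_mono AE_I2) auto
  ultimately show "AE \<omega> in M. real_cond_exp M (\<F> s) (R u) \<omega> \<le> R s \<omega>"
    by eventually_elim simp
qed (use R_adapted R_integrable in auto)

lemma \<phi>_le_R:
  assumes s: "0 \<le> s" "s \<le> t"
  shows "AE \<omega> in M. \<phi> s \<omega> \<le> R s \<omega>"
  using Y_eq_X_plus_R_all[OF s] hsum_nonneg R_nonneg[OF s]
proof eventually_elim
  case (elim \<omega>)
  have "(\<Sum>i<N. h (R s \<omega> + X i s \<omega>)) = hsum s \<omega>"
    unfolding hsum_def using elim(1) by (intro sum.cong) (auto simp: add.commute)
  then have "0 \<le> (\<Sum>i<N. h (R s \<omega> + X i s \<omega>))" using elim(2) s t by auto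
  then show ?case
    unfolding \<phi>_def using min_shift_le[OF N_pos h_mono m_pos h_expansive] elim(3) by simp
qed

lemma h_continuous: "continuous_on UNIV h"
proof (rule lipschitz_on_continuous_on)
  show "\<bar>Mh\<bar>-lipschitz_on UNIV h"
  proof (rule lipschitz_onI)
    fix x y :: real
    have "\<bar>h x - h y\<bar> \<le> Mh * \<bar>x - y\<bar>" using h_lipschitz by blast
    also have "\<dots> \<le> \<bar>Mh\<bar> * \<bar>x - y\<bar>" by (intro mult_right_mono) auto
    finally show "dist (h x) (h y) \<le> \<bar>Mh\<bar> * dist x y" by (simp add: dist_real_def)
  qed simp
qed

lemma hsum_adapted: "0 \<le> u \<Longrightarrow> u \<le> T \<Longrightarrow> hsum u \<in> borel_measurable (\<F> u)"
  unfolding hsum_def using Y_adapted borel_measurable_continuous_onI[OF h_continuous]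
  by (intro borel_measurable_sum) (auto intro: measurable_compose)

lemma hsum_continuous: "\<omega> \<in> space M \<Longrightarrow> continuous_on {0..T} (\<lambda>u. hsum u \<omega>)"
  unfolding hsum_def using solution
  by (intro continuous_on_sum continuous_on_compose2[OF h_continuous]) (auto simp: flat_solution_def)

text \<open>A consequence of the Skorokhod condition.\<close>

lemma K_flat_where_hsum_pos:
  "AE \<omega> in M. \<forall>a b. 0 \<le> a \<longrightarrow> a \<le> b \<longrightarrow> b \<le> T \<longrightarrow> (\<forall>v\<in>{a..b}. 0 < hsum v \<omega>) \<longrightarrow> K b \<omega> = K a \<omega>"
proof -
  have "AE \<omega> in M. (LINT u:{0..T}|interval_measure (\<lambda>u. K (max 0 (min u T)) \<omega>). hsum u \<omega> / real N) = 0"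
    using solution unfolding flat_solution_def hsum_def by blast
  then show ?thesis
    using hsum_nonneg AE_space
  proof eventually_elim
    case (elim \<omega>)
    have N0: "real N > 0" using N_pos by simp
    show ?case
    proof (intro allI impI)
      fix a b assume ab: "0 \<le> a" "a \<le> b" "b \<le> T" "\<forall>v\<in>{a..b}. 0 < hsum v \<omega>"
      show "K b \<omega> = K a \<omega>"
      proof (rule interval_measure_integral_zero_imp_flat[of T "\<lambda>u. K u \<omega>" "\<lambda>u. hsum u \<omega> / real N"])
        show "continuous_on {0..T} (\<lambda>u. hsum u \<omega> / real N)"
          using hsum_continuous[OF elim(3)] N_pos by (intro continuous_intros) auto
      qed (use elim ab K_path N0 in auto)
    qed
  qed
qed

subsection \<open>Minimality of \<open>R\<close>\<close>

definition hit :: "real \<Rightarrow> real \<Rightarrow> nat \<Rightarrow> 'a \<Rightarrow> nat" where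
  "hit s d n \<omega> = grid_hitting_index (\<lambda>u. hsum u \<omega>) d s t n"

lemma hit_le: "hit s d n \<omega> \<le> n"
  unfolding hit_def by (rule grid_hitting_index_le)

lemma grid_bounds: "0 \<le> s \<Longrightarrow> s \<le> t \<Longrightarrow> j \<le> n \<Longrightarrow> s \<le> grid s t n j \<and> grid s t n j \<le> t"
  using grid_in_Icc by auto

lemma le_hit_measurable:
  assumes s: "0 \<le> s" "s \<le> t" and jk: "j \<le> Suc k" "k \<le> n"
  shows "{\<omega> \<in> space M. j \<le> hit s d n \<omega>} \<in> sets (\<F> (grid s t n k))"
proof -
  have "{\<omega> \<in> space M. j \<le> hit s d n \<omega>}
      = {\<omega> \<in> space (\<F> (grid s t n k)). \<forall>i\<in>{..<j}. i \<noteq> n \<and> d < hsum (grid s t n i) \<omega>}"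
    unfolding hit_def le_grid_hitting_index_iff by auto
  also have "\<dots> \<in> sets (\<F> (grid s t n k))"
  proof (rule sets.sets_Collect_finite_All)
    fix i assume "i \<in> {..<j}"
    then have "i \<le> k" using jk by simp
    then have "hsum (grid s t n i) \<in> borel_measurable (\<F> (grid s t n k))"
      using measurable_\<F>_mono[OF hsum_adapted] grid_bounds[OF s] grid_mono[OF s(2)] jk s t
      by (meson order.trans)
    then show "{\<omega> \<in> space (\<F> (grid s t n k)). i \<noteq> n \<and> d < hsum (grid s t n i) \<omega>} \<in> sets (\<F> (grid s t n k))"
      by measurable
  qed simp
  finally show ?thesis .
qed

lemma hit_measurable:
  assumes s: "0 \<le> s" "s \<le> t" and j: "j \<le> n"
  shows "{\<omega> \<in> space M. hit s d n \<omega> = j} \<in> sets (\<F> (grid s t n j))"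
    and "{\<omega> \<in> space M. j < hit s d n \<omega>} \<in> sets (\<F> (grid s t n j))"
proof -
  have "{\<omega> \<in> space M. hit s d n \<omega> = j}
      = {\<omega> \<in> space M. j \<le> hit s d n \<omega>} - {\<omega> \<in> space M. Suc j \<le> hit s d n \<omega>}" by auto
  then show "{\<omega> \<in> space M. hit s d n \<omega> = j} \<in> sets (\<F> (grid s t n j))"
    using le_hit_measurable[OF s _ j] by auto
  show "{\<omega> \<in> space M. j < hit s d n \<omega>} \<in> sets (\<F> (grid s t n j))"
    using le_hit_measurable[OF s _ j, of "Suc j"] by (simp add: Suc_le_eq)
qed

lemma sets_\<F>_grid: "0 \<le> s \<Longrightarrow> s \<le> t \<Longrightarrow> j \<le> n \<Longrightarrow> sets (\<F> (grid s t n j)) \<subseteq> events"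
  using sets_\<F>_subset grid_bounds t by (meson order.trans)

lemma integral_at_hit:
  fixes V :: "real \<Rightarrow> 'a \<Rightarrow> real"
  assumes s: "0 \<le> s" "s \<le> t" and A: "A \<in> events"
    and V: "\<And>u. s \<le> u \<Longrightarrow> u \<le> t \<Longrightarrow> integrable M (V u)"
  shows "integrable M (\<lambda>\<omega>. indicator A \<omega> * V (grid s t n (hit s d n \<omega>)) \<omega>)"
    and "(\<integral>\<omega>. indicator A \<omega> * V (grid s t n (hit s d n \<omega>)) \<omega> \<partial>M)
      = (\<Sum>j\<le>n. \<integral>\<omega>. indicator ({\<omega> \<in> space M. hit s d n \<omega> = j} \<inter> A) \<omega> * V (grid s t n j) \<omega> \<partial>M)"
proof -
  note level = integral_at_random_index[where \<tau>="hit s d n" and n=n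
      and X="\<lambda>j \<omega>. indicator A \<omega> * V (grid s t n j) \<omega>"]
  have "integrable M (\<lambda>\<omega>. indicator A \<omega> * V (grid s t n j) \<omega>)" if "j \<le> n" for j
    using integrable_mult_indicator[OF A V] grid_bounds[OF s that] by simp
  moreover have "{\<omega> \<in> space M. hit s d n \<omega> = j} \<in> events" if "j \<le> n" for j
    using hit_measurable(1)[OF s that] sets_\<F>_grid[OF s that] by auto
  ultimately show "integrable M (\<lambda>\<omega>. indicator A \<omega> * V (grid s t n (hit s d n \<omega>)) \<omega>)"
    and "(\<integral>\<omega>. indicator A \<omega> * V (grid s t n (hit s d n \<omega>)) \<omega> \<partial>M)
      = (\<Sum>j\<le>n. \<integral>\<omega>. indicator ({\<omega> \<in> space M. hit s d n \<omega> = j} \<inter> A) \<omega> * V (grid s t n j) \<omega> \<partial>M)"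
    using level hit_le by (auto simp: indicator_inter_arith mult.assoc)
qed

lemma integrable_at_hit:
  fixes V :: "real \<Rightarrow> 'a \<Rightarrow> real"
  assumes s: "0 \<le> s" "s \<le> t" and V: "\<And>u. s \<le> u \<Longrightarrow> u \<le> t \<Longrightarrow> integrable M (V u)"
  shows "integrable M (\<lambda>\<omega>. V (grid s t n (hit s d n \<omega>)) \<omega>)"
proof -
  have "integrable M (\<lambda>\<omega>. indicator (space M) \<omega> * V (grid s t n (hit s d n \<omega>)) \<omega>)"
    using integral_at_hit(1)[OF s sets.top V] .
  then show ?thesis by (rule Bochner_Integration.integrable_cong[THEN iffD1, rotated 2]) auto
qed

lemma integral_R_at_hit:
  assumes s: "0 \<le> s" "s \<le> t" and A: "A \<in> sets (\<F> s)"
  shows "(\<integral>\<omega>. indicator A \<omega> * R (grid s t n (hit s d n \<omega>)) \<omega> \<partial>M)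
    = (\<integral>\<omega>. indicator A \<omega> * R s \<omega> \<partial>M) - (\<integral>\<omega>. indicator A \<omega> * (K (grid s t n (hit s d n \<omega>)) \<omega> - K s \<omega>) \<partial>M)"
proof -
  have AM: "A \<in> events" using A sets_\<F>_subset[of s] s t by auto
  note KK = integral_at_hit[OF s AM, where V="\<lambda>u \<omega>. K t \<omega> - K u \<omega>"]
  note KKs = integral_at_hit[OF s AM, where V="\<lambda>u \<omega>. K u \<omega> - K s \<omega>"]
  have "(\<integral>\<omega>. indicator A \<omega> * R (grid s t n (hit s d n \<omega>)) \<omega> \<partial>M)
      = (\<integral>\<omega>. indicator A \<omega> * (K t \<omega> - K (grid s t n (hit s d n \<omega>)) \<omega>) \<partial>M)"
  proof -
    have "(\<integral>\<omega>. indicator ({\<omega> \<in> space M. hit s d n \<omega> = j} \<inter> A) \<omega> * R (grid s t n j) \<omega> \<partial>M)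
        = (\<integral>\<omega>. indicator ({\<omega> \<in> space M. hit s d n \<omega> = j} \<inter> A) \<omega> * (K t \<omega> - K (grid s t n j) \<omega>) \<partial>M)"
      if "j \<le> n" for j
    proof (rule integral_indicator_R)
      show "{\<omega> \<in> space M. hit s d n \<omega> = j} \<inter> A \<in> sets (\<F> (grid s t n j))"
        using hit_measurable(1)[OF s that] sets_\<F>_mono[of s "grid s t n j"] A grid_bounds[OF s that] t
        by auto
    qed (use grid_bounds[OF s that] s in auto)
    then show ?thesis
      using integral_at_hit(2)[OF s AM, where V=R] KK(2) R_integrable integrable_K_increment s
      by (auto intro!: sum.cong)
  qed
  also have "\<dots> = (\<integral>\<omega>. indicator A \<omega> * (K t \<omega> - K s \<omega>) - indicator A \<omega> * (K (grid s t n (hit s d n \<omega>)) \<omega> - K s \<omega>) \<partial>M)"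
    by (rule Bochner_Integration.integral_cong) (auto simp: algebra_simps)
  also have "\<dots> = (\<integral>\<omega>. indicator A \<omega> * R s \<omega> \<partial>M) - (\<integral>\<omega>. indicator A \<omega> * (K (grid s t n (hit s d n \<omega>)) \<omega> - K s \<omega>) \<partial>M)"
    using integrable_mult_indicator[OF AM integrable_K_increment[OF s]] KKs(1) K_integrable s t
      integral_indicator_R[OF s A]
    by (subst Bochner_Integration.integral_diff) auto
  finally show ?thesis .
qed

lemma K_at_hit_bounds:
  assumes "\<omega> \<in> space M" and s: "0 \<le> s" "s \<le> t"
  shows "K s \<omega> \<le> K (grid s t n (hit s d n \<omega>)) \<omega>" and "K (grid s t n (hit s d n \<omega>)) \<omega> \<le> K t \<omega>"
proof -
  have u: "s \<le> grid s t n (hit s d n \<omega>)" "grid s t n (hit s d n \<omega>) \<le> t"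
    using grid_bounds[OF s hit_le] by auto
  show "K s \<omega> \<le> K (grid s t n (hit s d n \<omega>)) \<omega>" using K_mono[OF assms(1) s(1) u(1)] u(2) t by simp
  show "K (grid s t n (hit s d n \<omega>)) \<omega> \<le> K t \<omega>" using K_mono[OF assms(1) _ u(2) t(2)] u(1) s by simp
qed

lemma K_at_hit_tendsto:
  assumes s: "0 \<le> s" "s \<le> t" and d: "0 < d"
  shows "AE \<omega> in M. (\<lambda>n. K (grid s t n (hit s d n \<omega>)) \<omega>) \<longlonglongrightarrow> K s \<omega>"
  using K_flat_where_hsum_pos AE_space
proof eventually_elim
  case (elim \<omega>)
  have sub: "{s..t} \<subseteq> {0..T}" using s t by auto
  show ?case
    unfolding hit_def
  proof (rule tendsto_at_grid_hitting_index[OF s(2) _ _ _ d])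
    show "continuous_on {s..t} (\<lambda>u. K u \<omega>)" "mono_on {s..t} (\<lambda>u. K u \<omega>)"
      using K_path[OF elim(2)] continuous_on_subset mono_on_subset sub by blast+
    show "continuous_on {s..t} (\<lambda>u. hsum u \<omega>)"
      using hsum_continuous[OF elim(2)] continuous_on_subset sub by blast
  qed (use elim(1) s t in auto)
qed

lemma supermart_integral_indicator_mono:
  assumes S: "supermart M \<F> t S" and ru: "0 \<le> r" "r \<le> u" "u \<le> t" and A: "A \<in> sets (\<F> r)"
  shows "(\<integral>\<omega>. indicator A \<omega> * S u \<omega> \<partial>M) \<le> (\<integral>\<omega>. indicator A \<omega> * S r \<omega> \<partial>M)"
proof -
  interpret Sr: sigma_finite_subalgebra M "\<F> r" using sigma_finite_subalgebra_\<F> ru t by simp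
  have AM: "A \<in> events" using A sets_\<F>_subset[of r] ru t by auto
  have Su: "integrable M (S u)" and Sr: "integrable M (S r)" using S ru unfolding supermart_def by auto
  have "(\<integral>\<omega>. indicator A \<omega> * S u \<omega> \<partial>M) = (\<integral>\<omega>. indicator A \<omega> * real_cond_exp M (\<F> r) (S u) \<omega> \<partial>M)"
    using Sr.integral_indicator_real_cond_exp[OF Su A] by simp
  also have "\<dots> \<le> (\<integral>\<omega>. indicator A \<omega> * S r \<omega> \<partial>M)"
  proof (rule integral_mono_AE)
    show "integrable M (\<lambda>\<omega>. indicator A \<omega> * real_cond_exp M (\<F> r) (S u) \<omega>)"
      using integrable_mult_indicator[OF AM Sr.real_cond_exp_int(1)[OF Su]] by simp
    show "integrable M (\<lambda>\<omega>. indicator A \<omega> * S r \<omega>)" using integrable_mult_indicator[OF AM Sr] by simp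
    have "AE \<omega> in M. real_cond_exp M (\<F> r) (S u) \<omega> \<le> S r \<omega>" using S ru unfolding supermart_def by auto
    then show "AE \<omega> in M. indicator A \<omega> * real_cond_exp M (\<F> r) (S u) \<omega> \<le> indicator A \<omega> * S r \<omega>"
      by eventually_elim (auto simp: indicator_def)
  qed
  finally show ?thesis .
qed

lemma integral_S_at_hit_le:
  assumes S: "supermart M \<F> t S" and s: "0 \<le> s" "s \<le> t" and A: "A \<in> sets (\<F> s)"
  shows "(\<integral>\<omega>. indicator A \<omega> * S (grid s t n (hit s d n \<omega>)) \<omega> \<partial>M) \<le> (\<integral>\<omega>. indicator A \<omega> * S s \<omega> \<partial>M)"
proof -
  have AM: "A \<in> events" using A sets_\<F>_subset[of s] s t by auto
  have "(\<integral>\<omega>. indicator A \<omega> * S (grid s t n (hit s d n \<omega>)) \<omega> \<partial>M) \<le> (\<integral>\<omega>. indicator A \<omega> * S (grid s t n 0) \<omega> \<partial>M)"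
  proof (rule integral_at_stopping_index_le[where \<tau>="hit s d n" and n=n])
    fix j assume j: "j < n"
    define C where "C = {\<omega> \<in> space M. j < hit s d n \<omega>}"
    have gj: "s \<le> grid s t n j" "grid s t n j \<le> grid s t n (Suc j)" "grid s t n (Suc j) \<le> t"
      using grid_bounds[OF s, of j n] grid_bounds[OF s, of "Suc j" n] grid_mono[OF s(2), of j "Suc j"] j
      by auto
    have "A \<in> sets (\<F> (grid s t n j))" using sets_\<F>_mono[OF gj(1)] gj t A by auto
    moreover have C: "C \<in> sets (\<F> (grid s t n j))" unfolding C_def using hit_measurable(2)[OF s] j by simp
    ultimately have "C \<inter> A \<in> sets (\<F> (grid s t n j))" by (rule sets.Int[rotated])
    from supermart_integral_indicator_mono[OF S _ gj(2,3) this]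
    show "(\<integral>\<omega>. indicator C \<omega> * (indicator A \<omega> * S (grid s t n (Suc j)) \<omega>) \<partial>M)
        \<le> (\<integral>\<omega>. indicator C \<omega> * (indicator A \<omega> * S (grid s t n j) \<omega>) \<partial>M)"
      using gj s by (simp add: indicator_inter_arith mult.assoc)
    show "C \<in> events" using C sets_\<F>_grid[OF s, of j n] j by auto
  next
    fix j assume "j \<le> n"
    then have "integrable M (S (grid s t n j))"
      using S grid_bounds[OF s] s unfolding supermart_def by (meson atLeastAtMost_iff order.trans)
    from integrable_mult_indicator[OF AM this]
    show "integrable M (\<lambda>\<omega>. indicator A \<omega> * S (grid s t n j) \<omega>)" by simp
  qed (rule hit_le)
  then show ?thesis by simp
qed

text \<open>At the hitting point either the constraint is almost active, so that \<open>R\<close> exceeds \<open>\<phi>\<close>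
  by at most \<open>d / (N m)\<close> (\<open>min_shift_gap\<close>), or the grid has reached \<open>t\<close>, where \<open>R\<close> vanishes.\<close>

lemma R_at_hit_le:
  assumes S: "\<forall>u\<in>{0..t}. AE \<omega> in M. \<phi> u \<omega> \<le> S u \<omega>"
    and s: "0 \<le> s" "s \<le> t" and d: "0 < d" and n: "1 \<le> n"
  shows "AE \<omega> in M. R (grid s t n (hit s d n \<omega>)) \<omega> \<le> S (grid s t n (hit s d n \<omega>)) \<omega> + d / (real N * m)"
proof -
  define g where "g j = grid s t n j" for j
  have g: "0 \<le> g j \<and> g j \<le> t" if "j \<le> n" for j using grid_bounds[OF s that] s unfolding g_def by auto
  have "AE \<omega> in M. \<forall>j\<in>{..n}. \<phi> (g j) \<omega> \<le> S (g j) \<omega>"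
    using S g by (subst AE_finite_all) auto
  moreover have "AE \<omega> in M. \<forall>j\<in>{..n}. 0 \<le> R (g j) \<omega>"
    using R_nonneg g by (subst AE_finite_all) auto
  moreover have "AE \<omega> in M. \<forall>j\<in>{..n}. \<forall>i<N. Y i (g j) \<omega> = X i (g j) \<omega> + R (g j) \<omega>"
    using Y_eq_X_plus_R_all g by (subst AE_finite_all) auto
  ultimately show ?thesis
    using hsum_nonneg R_final
  proof eventually_elim
    case (elim \<omega>)
    define j where "j = hit s d n \<omega>"
    have jn: "j \<le> n" unfolding j_def by (rule hit_le)
    have Nm: "real N * m > 0" using N_pos m_pos by simp
    have "R (g j) \<omega> \<le> S (g j) \<omega> + d / (real N * m)"
    proof (cases "j = n")
      case True
      then have "R (g j) \<omega> = 0" using grid_last[OF n] elim(5) unfolding g_def by simp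
      moreover have "0 \<le> \<phi> (g j) \<omega>"
        unfolding \<phi>_def by (rule min_shift_nonneg[OF N_pos h_mono m_pos h_expansive])
      moreover have "0 \<le> d / (real N * m)" using d Nm by simp
      moreover have "\<phi> (g j) \<omega> \<le> S (g j) \<omega>" using elim(1) jn by auto
      ultimately show ?thesis by linarith
    next
      case False
      then have "hsum (g j) \<omega> \<le> d"
        using grid_hitting_index_hits[of "\<lambda>u. hsum u \<omega>" d s t n] unfolding j_def g_def hit_def by auto
      moreover have "(\<Sum>i<N. h (R (g j) \<omega> + X i (g j) \<omega>)) = hsum (g j) \<omega>"
        unfolding hsum_def using elim(3) jn by (intro sum.cong) (auto simp: add.commute)
      moreover have "0 \<le> hsum (g j) \<omega>" using elim(4) g[OF jn] t by auto
      moreover have "0 \<le> R (g j) \<omega>" using elim(2) jn by auto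
      ultimately have "R (g j) \<omega> - \<phi> (g j) \<omega> \<le> hsum (g j) \<omega> / (real N * m)"
        using min_shift_gap[OF N_pos h_mono m_pos h_expansive, of "R (g j) \<omega>" "\<lambda>i. X i (g j) \<omega>"]
        unfolding \<phi>_def by simp
      also have "\<dots> \<le> d / (real N * m)" using \<open>hsum (g j) \<omega> \<le> d\<close> Nm by (simp add: divide_right_mono)
      finally have "R (g j) \<omega> - \<phi> (g j) \<omega> \<le> d / (real N * m)" .
      moreover have "\<phi> (g j) \<omega> \<le> S (g j) \<omega>" using elim(1) jn by auto
      ultimately show ?thesis by linarith
    qed
    then show ?case unfolding g_def j_def .
  qed
qed

lemma integral_R_at_hit_le:
  assumes S: "supermart M \<F> t S" "\<forall>u\<in>{0..t}. AE \<omega> in M. \<phi> u \<omega> \<le> S u \<omega>"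
    and s: "0 \<le> s" "s \<le> t" and d: "0 < d" and n: "1 \<le> n" and A: "A \<in> events"
  shows "(\<integral>\<omega>. indicator A \<omega> * R (grid s t n (hit s d n \<omega>)) \<omega> \<partial>M)
    \<le> (\<integral>\<omega>. indicator A \<omega> * S (grid s t n (hit s d n \<omega>)) \<omega> \<partial>M) + d / (real N * m)"
proof -
  define c where "c = d / (real N * m)"
  have c: "0 \<le> c" unfolding c_def using d N_pos m_pos by simp
  note at_hit = integral_at_hit[OF s A, where n=n and d=d]
  have S_int: "integrable M (S u)" if "s \<le> u" "u \<le> t" for u using S(1) s that unfolding supermart_def by auto
  have "(\<integral>\<omega>. indicator A \<omega> * R (grid s t n (hit s d n \<omega>)) \<omega> \<partial>M)
      \<le> (\<integral>\<omega>. indicator A \<omega> * S (grid s t n (hit s d n \<omega>)) \<omega> + c \<partial>M)"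
  proof (rule integral_mono_AE)
    show "integrable M (\<lambda>\<omega>. indicator A \<omega> * R (grid s t n (hit s d n \<omega>)) \<omega>)"
      using at_hit(1) R_integrable s by auto
    show "integrable M (\<lambda>\<omega>. indicator A \<omega> * S (grid s t n (hit s d n \<omega>)) \<omega> + c)"
      using at_hit(1) S_int by auto
    show "AE \<omega> in M. indicator A \<omega> * R (grid s t n (hit s d n \<omega>)) \<omega>
        \<le> indicator A \<omega> * S (grid s t n (hit s d n \<omega>)) \<omega> + c"
      using R_at_hit_le[OF S(2) s d n] unfolding c_def[symmetric]
      by eventually_elim (use c in \<open>auto simp: indicator_def\<close>)
  qed
  also have "\<dots> = (\<integral>\<omega>. indicator A \<omega> * S (grid s t n (hit s d n \<omega>)) \<omega> \<partial>M) + c"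
    using at_hit(1) S_int by (simp add: prob_space)
  finally show ?thesis unfolding c_def .
qed

lemma integral_indicator_K_at_hit_le:
  assumes s: "0 \<le> s" "s \<le> t" and A: "A \<in> events"
  shows "(\<integral>\<omega>. indicator A \<omega> * (K (grid s t n (hit s d n \<omega>)) \<omega> - K s \<omega>) \<partial>M)
    \<le> (\<integral>\<omega>. K (grid s t n (hit s d n \<omega>)) \<omega> - K s \<omega> \<partial>M)"
proof (rule integral_mono)
  have KK_int: "integrable M (\<lambda>\<omega>. K u \<omega> - K s \<omega>)" if "s \<le> u" "u \<le> t" for u
    using K_integrable s t that by auto
  show "integrable M (\<lambda>\<omega>. indicator A \<omega> * (K (grid s t n (hit s d n \<omega>)) \<omega> - K s \<omega>))"
    using integral_at_hit(1)[OF s A, where V="\<lambda>u \<omega>. K u \<omega> - K s \<omega>"] KK_int by simp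
  show "integrable M (\<lambda>\<omega>. K (grid s t n (hit s d n \<omega>)) \<omega> - K s \<omega>)"
    using integrable_at_hit[OF s, where V="\<lambda>u \<omega>. K u \<omega> - K s \<omega>"] KK_int by simp
  fix \<omega> assume "\<omega> \<in> space M"
  then have "K s \<omega> \<le> K (grid s t n (hit s d n \<omega>)) \<omega>" using K_at_hit_bounds(1)[OF _ s] by blast
  then show "indicator A \<omega> * (K (grid s t n (hit s d n \<omega>)) \<omega> - K s \<omega>) \<le> K (grid s t n (hit s d n \<omega>)) \<omega> - K s \<omega>"
    by (auto simp: indicator_def)
qed

lemma integral_R_le_integral_S:
  assumes S: "supermart M \<F> t S" "\<forall>u\<in>{0..t}. AE \<omega> in M. \<phi> u \<omega> \<le> S u \<omega>"
    and s: "0 \<le> s" "s \<le> t" and d: "0 < d" and n: "1 \<le> n" and A: "A \<in> sets (\<F> s)"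
  shows "(\<integral>\<omega>. indicator A \<omega> * R s \<omega> \<partial>M)
    \<le> (\<integral>\<omega>. indicator A \<omega> * S s \<omega> \<partial>M) + d / (real N * m)
      + (\<integral>\<omega>. K (grid s t n (hit s d n \<omega>)) \<omega> - K s \<omega> \<partial>M)"
proof -
  have AM: "A \<in> events" using A sets_\<F>_subset[of s] s t by auto
  show ?thesis
    using integral_R_at_hit[OF s A, where n=n and d=d] integral_R_at_hit_le[OF S s d n AM]
      integral_S_at_hit_le[OF S(1) s A, where n=n and d=d] integral_indicator_K_at_hit_le[OF s AM, where n=n and d=d]
    by linarith
qed

text \<open>The last term of the previous inequality tends to \<open>0\<close> by dominated convergence, and
  \<open>d\<close> is arbitrary.\<close>

lemma R_le_supermart:
  assumes S: "supermart M \<F> t S" "\<forall>u\<in>{0..t}. AE \<omega> in M. \<phi> u \<omega> \<le> S u \<omega>" and s: "0 \<le> s" "s \<le> t"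
  shows "AE \<omega> in M. R s \<omega> \<le> S s \<omega>"
proof (rule AE_le_of_integral_indicator_le[OF subalgebra_\<F>])
  show "s \<le> T" using s t by simp
  show "R s \<in> borel_measurable (\<F> s)" "integrable M (R s)" using R_adapted R_integrable[OF s] by auto
  show "S s \<in> borel_measurable (\<F> s)" "integrable M (S s)"
    using S(1) s unfolding supermart_def adapted_def by auto
  fix A assume A: "A \<in> sets (\<F> s)"
  show "(\<integral>\<omega>. indicator A \<omega> * R s \<omega> \<partial>M) \<le> (\<integral>\<omega>. indicator A \<omega> * S s \<omega> \<partial>M)"
  proof (rule field_le_epsilon)
    fix e :: real assume e: "0 < e"
    define d where "d = e * (real N * m)"
    have d: "0 < d" "d / (real N * m) = e" unfolding d_def using e N_pos m_pos by auto
    define a where "a n = (\<integral>\<omega>. K (grid s t n (hit s d n \<omega>)) \<omega> - K s \<omega> \<partial>M)" for n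
    have "a \<longlonglongrightarrow> (\<integral>\<omega>. 0 \<partial>M)"
      unfolding a_def
    proof (rule integral_dominated_convergence[where w="\<lambda>\<omega>. K t \<omega> - K s \<omega>"])
      show "(\<lambda>\<omega>. K (grid s t n (hit s d n \<omega>)) \<omega> - K s \<omega>) \<in> borel_measurable M" for n
        using integrable_at_hit[OF s, where V="\<lambda>u \<omega>. K u \<omega> - K s \<omega>"] K_integrable s t
        by (simp add: borel_measurable_integrable)
      show "AE \<omega> in M. (\<lambda>n. K (grid s t n (hit s d n \<omega>)) \<omega> - K s \<omega>) \<longlonglongrightarrow> 0"
        using K_at_hit_tendsto[OF s d(1)] by eventually_elim (auto intro: tendsto_eq_intros)
      show "AE \<omega> in M. norm (K (grid s t n (hit s d n \<omega>)) \<omega> - K s \<omega>) \<le> K t \<omega> - K s \<omega>" for n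
        using K_at_hit_bounds[OF _ s] by (intro AE_I2) fastforce
    qed (use integrable_K_increment[OF s] in auto)
    moreover have "\<forall>\<^sub>F n in sequentially.
        (\<integral>\<omega>. indicator A \<omega> * R s \<omega> \<partial>M) - (\<integral>\<omega>. indicator A \<omega> * S s \<omega> \<partial>M) - e \<le> a n"
      using eventually_ge_at_top[of 1]
    proof eventually_elim
      case (elim n)
      from integral_R_le_integral_S[OF S s d(1) elim A] show ?case unfolding a_def d(2) by linarith
    qed
    ultimately have "(\<integral>\<omega>. indicator A \<omega> * R s \<omega> \<partial>M) - (\<integral>\<omega>. indicator A \<omega> * S s \<omega> \<partial>M) - e \<le> (\<integral>\<omega>. 0 \<partial>M)"
      by (intro tendsto_le[OF _ _ tendsto_const]) auto
    then show "(\<integral>\<omega>. indicator A \<omega> * R s \<omega> \<partial>M) \<le> (\<integral>\<omega>. indicator A \<omega> * S s \<omega> \<partial>M) + e" by simp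
  qed
qed

lemma snell_envelope_R: "snell_envelope M \<F> t \<phi> R"
  unfolding snell_envelope_def using supermart_R \<phi>_le_R R_le_supermart by auto

end

theorem proposition3p2:
  fixes M :: "'a measure" and N :: nat and T t m Mh :: real
    and B :: "nat \<Rightarrow> real \<Rightarrow> 'a \<Rightarrow> real"
    and G :: "(real \<Rightarrow> real) \<Rightarrow> real" and F :: "real \<Rightarrow> (real \<Rightarrow> real) \<Rightarrow> real"
    and h :: "real \<Rightarrow> real"
    and Y :: "nat \<Rightarrow> real \<Rightarrow> 'a \<Rightarrow> real" and Z :: "nat \<Rightarrow> nat \<Rightarrow> real \<Rightarrow> 'a \<Rightarrow> real"
    and K :: "real \<Rightarrow> 'a \<Rightarrow> real"
  defines "\<F> \<equiv> aug_filt M N B"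
    and "\<xi> \<equiv> (\<lambda>i \<omega>. G (restrict (\<lambda>u. B i u \<omega>) {0..T}))"
    and "f \<equiv> (\<lambda>i s \<omega>. F s (restrict (\<lambda>u. B i (min u s) \<omega>) {0..T}))"
  defines "\<theta> \<equiv> (\<lambda>i \<omega>. \<xi> i \<omega> + min_shift N h (\<lambda>j. \<xi> j \<omega>))"
    and "X \<equiv> (\<lambda>i s. real_cond_exp M (\<F> s) (\<lambda>\<omega>. Y i t \<omega> + (LINT u:{s..t}|lborel. f i u \<omega>)))"
  defines "\<phi> \<equiv> (\<lambda>s \<omega>. min_shift N h (\<lambda>i. X i s \<omega>))"
  assumes "prob_space M"
    and "T > 0" and "N \<ge> 1"
    and "indep_std_BMs M N T B"
    and "G \<in> borel_measurable (\<Pi>\<^sub>M u\<in>{0..T}. borel)"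
    and "(\<lambda>(s, x). F s x) \<in> borel_measurable (borel \<Otimes>\<^sub>M (\<Pi>\<^sub>M u\<in>{0..T}. borel))"
    and "\<forall>i<N. integrable M (\<lambda>\<omega>. (\<xi> i \<omega>)\<^sup>2)"
    and "\<forall>i<N. progressive \<F> T (f i)"
    and "\<forall>i<N. (\<integral>\<^sup>+\<omega>. (\<integral>\<^sup>+u\<in>{0..T}. ennreal ((f i u \<omega>)\<^sup>2) \<partial>lborel) \<partial>M) < \<infinity>"
    and "mono h" and "0 < m" and "m \<le> Mh"
    and "\<forall>x y. m * \<bar>x - y\<bar> \<le> \<bar>h x - h y\<bar> \<and> \<bar>h x - h y\<bar> \<le> Mh * \<bar>x - y\<bar>"
    and "\<forall>i<N. (\<integral>\<omega>. h (\<xi> i \<omega>) \<partial>M) \<ge> 0"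
    and "flat_solution M \<F> N T B h \<theta> f Y Z K"
    and "0 \<le> t" and "t \<le> T"
  shows "(\<exists>R. snell_envelope M \<F> t \<phi> R) \<and>
         (\<forall>R. snell_envelope M \<F> t \<phi> R \<longrightarrow>
            (\<forall>i<N. \<forall>s\<in>{0..t}. AE \<omega> in M. Y i s \<omega> = X i s \<omega> + R s \<omega>))"
proof -
  \<comment> \<open>The hypotheses on \<open>G\<close>, \<open>F\<close>, \<open>\<xi>\<close>, \<open>m \<le> Mh\<close> and \<open>\<integral>h(\<xi>) \<ge> 0\<close> only serve the existence of the
    solution, which is assumed here.\<close>
  interpret S: flat_bsde_solution M N T B f h \<theta> Y Z K t m Mh
  proof (intro flat_bsde_solution.intro bsde_driver.intro brownian_filtration.intro
      flat_bsde_solution_axioms.intro bsde_driver_axioms.intro brownian_filtration_axioms.intro)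
    show "\<forall>x y. m * \<bar>x - y\<bar> \<le> \<bar>h x - h y\<bar>" and "\<forall>x y. \<bar>h x - h y\<bar> \<le> Mh * \<bar>x - y\<bar>"
      using assms(19) by blast+
  qed (use assms(7-10,14-17,21-23) in \<open>simp_all add: assms(1)\<close>)
  have X: "X = S.X" and \<phi>: "\<phi> = S.\<phi>"
    unfolding assms(1,5,6) S.X_def S.\<phi>_def by (simp_all add: fun_eq_iff)
  have decomposition: "AE \<omega> in M. Y i s \<omega> = S.X i s \<omega> + R s \<omega>"
    if R: "snell_envelope M S.\<F> t S.\<phi> R" and i: "i < N" and s: "s \<in> {0..t}" for R i s
  proof -
    have "AE \<omega> in M. Y i s \<omega> = S.X i s \<omega> + S.R s \<omega>" using S.Y_eq_X_plus_R[OF i] s by simp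
    moreover have "AE \<omega> in M. R s \<omega> = S.R s \<omega>" by (rule snell_envelope_AE_unique[OF R S.snell_envelope_R s])
    ultimately show ?thesis by eventually_elim simp
  qed
  show ?thesis
    unfolding assms(1) X \<phi> using S.snell_envelope_R decomposition by blast
qed

end
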